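(* Let $f:M\to\mathbb{R}^3$ be an immersion with eq\"uiaffine transversal vector field $\xi$ and positive definite induced bilinear form $h$, and let $r_0$ be an isolated umbilical point. Let $\{X_1,X_2\}$ and $\{\tilde X_1,\tilde X_2\}$ be two smooth $h$-orthonormal frames near $r_0$, with associated vector fields $\mathcal{B}$ and $\tilde{\mathcal{B}}$. Then the order of $r_0$, and the property of $r_0$ being semi-homogeneous of degree $k$, are the same whether computed with $\mathcal{B}$ or with $\tilde{\mathcal{B}}$.
   Context: $D$ is the flat connection of $\mathbb{R}^3$; $h$ and the shape operator $B$ are defined by $D_Xf_*Y=f_*(\nabla_XY)+h(X,Y)\xi$ and $D_X\xi=-f_*(BX)+\tau(X)\xi$; eq\"uiaffine means $\tau=0$, in which case $B$ is $h$-self-adjoint. A point is umbilical if $B$ is a multiple of the identity there. For an $h$-orthonormal frame $\{X_1,X_2\}$ with matrix $(b_{ij})$ of $B$ (so $b_{12}=b_{21}$), set $\mathcal{B}=(b_{11}-b_{22})X_1+2b_{12}X_2$. The order of $r_0$ is the order of the first non-zero jet of $\mathcal{B}$ at $r_0$; $r_0$ is semi-homogeneous of degree $k$ if the $(k-1)$-jet of $\mathcal{B}$ at $r_0$ vanishes and $r_0$ is an isolated zero of the $k$-jet of $\mathcal{B}$. *)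

theory Defs
  imports "HOL-Analysis.Analysis"
begin

text \<open>Local model: the surface M is represented near the umbilical point by an open
chart domain U in real^2.  Tangent vectors are written in the coordinate basis.\<close>

fun pd :: "'n list \<Rightarrow> (real^'n::finite \<Rightarrow> 'b::real_normed_vector) \<Rightarrow> real^'n \<Rightarrow> 'b" where
  "pd [] g = g"
| "pd (i # is) g = (\<lambda>x. frechet_derivative (pd is g) (at x) (axis i 1))"

definition smooth_on :: "(real^'n::finite) set \<Rightarrow> (real^'n \<Rightarrow> 'b::real_normed_vector) \<Rightarrow> bool" where
  "smooth_on U g \<longleftrightarrow> open U \<and> (\<forall>is. \<forall>x\<in>U. pd is g differentiable (at x))"

text \<open>Differential f_* at p and second derivative D_v (f_* w) for constant coordinate fields.\<close>
definition dmap :: "(real^'n::finite \<Rightarrow> 'b::real_normed_vector) \<Rightarrow> real^'n \<Rightarrow> real^'n \<Rightarrow> 'b" where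
  "dmap g p v = frechet_derivative g (at p) v"

definition d2map :: "(real^'n::finite \<Rightarrow> 'b::real_normed_vector) \<Rightarrow> real^'n \<Rightarrow> real^'n \<Rightarrow> real^'n \<Rightarrow> 'b" where
  "d2map g p v w = frechet_derivative (\<lambda>q. dmap g q w) (at p) v"

definition jet :: "nat \<Rightarrow> (real^'n::finite \<Rightarrow> 'b::real_normed_vector) \<Rightarrow> real^'n \<Rightarrow> real^'n \<Rightarrow> 'b" where
  "jet k V r x = (\<Sum>m\<le>k. \<Sum>is\<in>{is::'n list. length is = m}.
       (inverse (fact m) * (\<Prod>i\<leftarrow>is. (x - r) $ i)) *\<^sub>R pd is V r)"

definition jet_order :: "(real^'n::finite \<Rightarrow> 'b::real_normed_vector) \<Rightarrow> real^'n \<Rightarrow> enat" where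
  "jet_order V r = (if \<exists>k. jet k V r \<noteq> (\<lambda>_. 0)
                    then enat (LEAST k. jet k V r \<noteq> (\<lambda>_. 0)) else \<infinity>)"

definition isolated_zero :: "(real^'n::finite \<Rightarrow> 'b::real_normed_vector) \<Rightarrow> real^'n \<Rightarrow> bool" where
  "isolated_zero P r \<longleftrightarrow> P r = 0 \<and> (\<exists>e>0. \<forall>x. 0 < dist x r \<and> dist x r < e \<longrightarrow> P x \<noteq> 0)"

definition semi_homogeneous :: "nat \<Rightarrow> (real^'n::finite \<Rightarrow> 'b::real_normed_vector) \<Rightarrow> real^'n \<Rightarrow> bool" where
  "semi_homogeneous k V r \<longleftrightarrow>
     (0 < k \<longrightarrow> jet (k - 1) V r = (\<lambda>_. 0)) \<and> isolated_zero (jet k V r) r"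

definition umbilical :: "(real^2 \<Rightarrow> real^2 \<Rightarrow> real^2) \<Rightarrow> real^2 \<Rightarrow> bool" where
  "umbilical B p \<longleftrightarrow> (\<exists>c. \<forall>v. B p v = c *\<^sub>R v)"

definition h_orthonormal_frame ::
  "(real^2 \<Rightarrow> real^2 \<Rightarrow> real^2 \<Rightarrow> real) \<Rightarrow> (real^2) set \<Rightarrow> (real^2 \<Rightarrow> real^2) \<Rightarrow> (real^2 \<Rightarrow> real^2) \<Rightarrow> bool" where
  "h_orthonormal_frame h V X1 X2 \<longleftrightarrow>
     (\<forall>p\<in>V. h p (X1 p) (X1 p) = 1 \<and> h p (X2 p) (X2 p) = 1 \<and> h p (X1 p) (X2 p) = 0)"

definition calB ::
  "(real^2 \<Rightarrow> real^2 \<Rightarrow> real^2 \<Rightarrow> real) \<Rightarrow> (real^2 \<Rightarrow> real^2 \<Rightarrow> real^2) \<Rightarrow> (real^2 \<Rightarrow> real^2) \<Rightarrow> (real^2 \<Rightarrow> real^2) \<Rightarrow> real^2 \<Rightarrow> real^2" where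
  "calB h B X1 X2 p =
     (h p (X1 p) (B p (X1 p)) - h p (X2 p) (B p (X2 p))) *\<^sub>R X1 p
     + (2 * h p (X1 p) (B p (X2 p))) *\<^sub>R X2 p"

end

theory Submission
  imports Defs
begin

text \<open>
  Write \<open>Y1 = a X1 + b X2\<close>. Orthonormality forces \<open>a\<^sup>2 + b\<^sup>2 = 1\<close> and
  \<open>Y2 = \<plusminus>(-b X1 + a X2)\<close>, and a direct computation that uses the \<open>h\<close>-self-adjointness of
  \<open>B\<close> gives \<open>\<B>\<^sub>Y = L \<B>\<^sub>X\<close> pointwise, where \<open>L\<close> acts on \<open>X\<close>-coordinates as
  multiplication by the unit complex number \<open>a - i b\<close>. So each of the two fields is obtained
  from the other by a family of linear maps that depends continuously on the point and is
  invertible at \<open>r\<^sub>0\<close>. By Taylor's theorem along lines through \<open>r\<^sub>0\<close>, the \<open>k\<close>-jet of a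
  smooth map vanishes iff the map is \<open>o(t\<^sup>k)\<close> along every line; this is preserved by such
  families, and once the \<open>(k-1)\<close>-jets vanish, the \<open>k\<close>-jet of \<open>\<B>\<^sub>Y\<close> is \<open>L(r\<^sub>0)\<close> applied
  to that of \<open>\<B>\<^sub>X\<close>. Hence both fields have the same vanishing jets, and leading jets with
  the same zero set. Self-adjointness of \<open>B\<close> and symmetry of \<open>h\<close> come from the symmetry
  of the second derivatives of \<open>\<xi>\<close> and \<open>f\<close>.
\<close>

section \<open>Smooth maps on open subsets of \<open>\<real>\<^sup>n\<close>\<close>

lemma axis_expansion: "(\<Sum>i\<in>UNIV. (x $ i) *\<^sub>R axis i (1::real)) = (x::real^'n::finite)"
  using basis_expansion[of x] by (simp add: scalar_mult_eq_scaleR)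

lemma linear_axis_expansion:
  fixes L :: "real^'n::finite \<Rightarrow> 'b::real_vector"
  assumes "linear L"
  shows "L x = (\<Sum>i\<in>UNIV. (x $ i) *\<^sub>R L (axis i 1))"
proof -
  have "L x = L (\<Sum>i\<in>UNIV. (x $ i) *\<^sub>R axis i 1)"
    by (simp add: axis_expansion)
  then show ?thesis
    by (simp add: linear_sum[OF assms] linear_scale[OF assms])
qed

lemma frechet_derivative_axis_expansion:
  fixes g :: "real^'n::finite \<Rightarrow> 'b::real_normed_vector"
  assumes "g differentiable (at x)"
  shows "frechet_derivative g (at x) v = (\<Sum>i\<in>UNIV. (v $ i) *\<^sub>R pd [i] g x)"
  using linear_axis_expansion[OF linear_frechet_derivative[OF assms], of v] by simp

lemma pd_append: "pd (is @ js) g = pd is (pd js g)"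
  by (induction "is") auto

lemma pd_single_pd: "pd [i] (pd is g) = pd (i # is) g"
  by simp

lemma frechet_derivative_cong_open:
  assumes "open S" "x \<in> S" "\<And>y. y \<in> S \<Longrightarrow> a y = b y"
  shows "frechet_derivative a (at x) = frechet_derivative b (at x)"
proof -
  have "(a has_derivative D) (at x) \<longleftrightarrow> (b has_derivative D) (at x)" for D
    using has_derivative_transform_within_open[OF _ assms(1,2), of a D UNIV b]
      has_derivative_transform_within_open[OF _ assms(1,2), of b D UNIV a] assms(3) by metis
  then show ?thesis
    unfolding frechet_derivative_def by simp
qed

lemma pd_cong_open:
  assumes "open S" "\<And>y. y \<in> S \<Longrightarrow> a y = b y" "x \<in> S"
  shows "pd is a x = pd is b x"
  using assms(3)
proof (induction "is" arbitrary: x)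
  case Nil
  then show ?case using assms(2) by simp
next
  case (Cons i "is")
  have "frechet_derivative (pd is a) (at x) = frechet_derivative (pd is b) (at x)"
    by (rule frechet_derivative_cong_open[OF assms(1) Cons.prems]) (rule Cons.IH)
  then show ?case by simp
qed

lemma differentiable_transform_open:
  assumes "open S" "x \<in> S" "\<And>y. y \<in> S \<Longrightarrow> a y = b y" "a differentiable (at x)"
  shows "b differentiable (at x)"
  using assms has_derivative_transform_within_open unfolding differentiable_def by metis

lemma pd_single_eq:
  assumes "(f has_derivative D) (at x)"
  shows "pd [j] f x = D (axis j 1)"
  using frechet_derivative_at[OF assms] by simp

lemma smooth_on_open: "smooth_on S g \<Longrightarrow> open S"
  unfolding smooth_on_def by blast

lemma smooth_on_subset: "smooth_on S g \<Longrightarrow> open T \<Longrightarrow> T \<subseteq> S \<Longrightarrow> smooth_on T g"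
  unfolding smooth_on_def by blast

lemma smooth_on_pd: "smooth_on S g \<Longrightarrow> smooth_on S (pd js g)"
  unfolding smooth_on_def by (metis pd_append)

lemma smooth_on_pd_differentiable: "smooth_on S g \<Longrightarrow> x \<in> S \<Longrightarrow> pd is g differentiable (at x)"
  unfolding smooth_on_def by blast

lemma smooth_on_differentiable: "smooth_on S g \<Longrightarrow> x \<in> S \<Longrightarrow> g differentiable (at x)"
  unfolding smooth_on_def by (metis pd.simps(1))

lemma smooth_on_isCont: "smooth_on S g \<Longrightarrow> x \<in> S \<Longrightarrow> isCont g x"
  using smooth_on_differentiable differentiable_imp_continuous_within by blast

lemma smooth_on_cong:
  assumes "smooth_on S a" "\<And>y. y \<in> S \<Longrightarrow> a y = b y"
  shows "smooth_on S b"
  unfolding smooth_on_def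
proof (intro conjI allI ballI)
  show S: "open S" using assms(1) by (rule smooth_on_open)
  fix "is" x assume x: "x \<in> S"
  have "\<And>y. y \<in> S \<Longrightarrow> pd is a y = pd is b y"
    using pd_cong_open[OF S, of a b] assms(2) by blast
  then show "pd is b differentiable (at x)"
    using differentiable_transform_open[OF S x] smooth_on_pd_differentiable[OF assms(1) x] by blast
qed

lemma smooth_onI_coinduct:
  assumes "open S" "P g"
    and step: "\<And>g. P g \<Longrightarrow> (\<forall>x\<in>S. g differentiable (at x)) \<and> (\<forall>j. \<exists>g'. P g' \<and> (\<forall>x\<in>S. pd [j] g x = g' x))"
  shows "smooth_on S g"
proof -
  have "\<forall>g. P g \<longrightarrow> (\<forall>x\<in>S. pd is g differentiable (at x))" for "is"
  proof (induction "is" rule: rev_induct)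
    case Nil
    then show ?case using step by simp
  next
    case (snoc j "is")
    show ?case
    proof (intro allI impI ballI)
      fix g x assume "P g" "x \<in> S"
      obtain g' where g': "P g'" "\<forall>x\<in>S. pd [j] g x = g' x"
        using step[OF \<open>P g\<close>] by blast
      have "\<And>y. y \<in> S \<Longrightarrow> pd is g' y = pd (is @ [j]) g y"
        using pd_cong_open[OF assms(1), of g' "pd [j] g"] g'(2) by (simp add: pd_append)
      then show "pd (is @ [j]) g differentiable (at x)"
        using differentiable_transform_open[OF assms(1) \<open>x \<in> S\<close>] snoc.IH g'(1) \<open>x \<in> S\<close> by blast
    qed
  qed
  then show ?thesis
    using assms(1,2) unfolding smooth_on_def by blast
qed

lemma smooth_on_const:
  fixes c :: "'b::real_normed_vector"
  assumes "open S"
  shows "smooth_on S (\<lambda>y::real^'n::finite. c)"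
proof (rule smooth_onI_coinduct[OF assms, of "\<lambda>q. \<exists>c. \<forall>x\<in>S. q x = c"])
  fix q :: "real^'n \<Rightarrow> 'b"
  assume "\<exists>c. \<forall>x\<in>S. q x = c"
  then obtain c where c: "\<forall>x\<in>S. q x = c" by blast
  have hd: "(q has_derivative (\<lambda>h. 0)) (at x)" if "x \<in> S" for x
    by (rule has_derivative_transform_within_open[OF has_derivative_const assms that]) (use c in simp)
  show "(\<forall>x\<in>S. q differentiable (at x)) \<and> (\<forall>j. \<exists>g'. (\<exists>c. \<forall>x\<in>S. g' x = c) \<and> (\<forall>x\<in>S. pd [j] q x = g' x))"
  proof (intro conjI allI exI[of _ "\<lambda>_. 0"])
    show "\<forall>x\<in>S. q differentiable (at x)"
      using hd unfolding differentiable_def by blast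
    show "\<forall>x\<in>S. pd [j] q x = 0" for j
      using pd_single_eq[OF hd] by simp
  qed simp
qed simp

lemma pd_add:
  assumes "open S"
    and diff: "\<And>js y. length js < length is \<Longrightarrow> y \<in> S \<Longrightarrow> pd js f differentiable (at y) \<and> pd js g differentiable (at y)"
    and x: "x \<in> S"
  shows "pd is (\<lambda>y. f y + g y) x = pd is f x + pd is g x"
  using diff x
proof (induction "is" arbitrary: x)
  case Nil
  then show ?case by simp
next
  case (Cons i "is")
  have diff': "pd js f differentiable (at y) \<and> pd js g differentiable (at y)"
    if "length js < length is" "y \<in> S" for js y
    using Cons.prems(1)[of js y] that by simp
  have IH: "pd is (\<lambda>y. f y + g y) y = pd is f y + pd is g y" if "y \<in> S" for y
    by (rule Cons.IH[OF diff' that])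
  have df: "pd is f differentiable (at x)" "pd is g differentiable (at x)"
    using Cons.prems(1)[of "is" x] Cons.prems(2) by simp_all
  have "frechet_derivative (pd is (\<lambda>y. f y + g y)) (at x) = frechet_derivative (\<lambda>y. pd is f y + pd is g y) (at x)"
    by (rule frechet_derivative_cong_open[OF assms(1) Cons.prems(2) IH])
  also have "\<dots> = (\<lambda>h. frechet_derivative (pd is f) (at x) h + frechet_derivative (pd is g) (at x) h)"
    by (rule frechet_derivative_at[symmetric]) (intro has_derivative_add frechet_derivative_works[THEN iffD1] df)
  finally show ?case by simp
qed

lemma smooth_on_add:
  assumes "smooth_on S f" "smooth_on S g"
  shows "smooth_on S (\<lambda>y. f y + g y)"
  unfolding smooth_on_def
proof (intro conjI allI ballI)
  show S: "open S" using assms(1) by (rule smooth_on_open)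
  fix "is" x assume x: "x \<in> S"
  have "pd is f y + pd is g y = pd is (\<lambda>y. f y + g y) y" if "y \<in> S" for y
    by (rule pd_add[OF S _ that, symmetric]) (use assms smooth_on_pd_differentiable in blast)
  moreover have "(\<lambda>y. pd is f y + pd is g y) differentiable (at x)"
    using assms x smooth_on_pd_differentiable by (intro differentiable_add) auto
  ultimately show "pd is (\<lambda>y. f y + g y) differentiable (at x)"
    using differentiable_transform_open[OF S x, of "\<lambda>y. pd is f y + pd is g y"] by blast
qed

lemma smooth_on_sum:
  assumes "open S" "\<And>i. i \<in> I \<Longrightarrow> smooth_on S (F i)"
  shows "smooth_on S (\<lambda>y. \<Sum>i\<in>I. F i y)"
proof (cases "finite I")
  case True
  then show ?thesis
    using assms(2) by (induction I rule: finite_induct) (auto intro: smooth_on_const[OF assms(1)] smooth_on_add)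
qed (simp add: smooth_on_const[OF assms(1)])

lemma pd_bounded_linear:
  assumes "bounded_linear L" "open S" "\<And>is x. x \<in> S \<Longrightarrow> pd is F differentiable (at x)" "x \<in> S"
  shows "pd is (\<lambda>y. L (F y)) x = L (pd is F x)"
  using assms(4)
proof (induction "is" arbitrary: x)
  case Nil
  then show ?case by simp
next
  case (Cons i "is")
  have "frechet_derivative (pd is (\<lambda>y. L (F y))) (at x) = frechet_derivative (\<lambda>y. L (pd is F y)) (at x)"
    by (rule frechet_derivative_cong_open[OF assms(2) Cons.prems]) (rule Cons.IH)
  also have "\<dots> = (\<lambda>h. L (frechet_derivative (pd is F) (at x) h))"
    by (rule frechet_derivative_at[symmetric])
      (intro bounded_linear.has_derivative[OF assms(1)] frechet_derivative_works[THEN iffD1] assms(3) Cons.prems)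
  finally show ?case by simp
qed

lemma smooth_on_bounded_linear:
  assumes "bounded_linear L" "smooth_on S F"
  shows "smooth_on S (\<lambda>y. L (F y))"
  unfolding smooth_on_def
proof (intro conjI allI ballI)
  show S: "open S" using assms(2) by (rule smooth_on_open)
  fix "is" x assume x: "x \<in> S"
  have "\<And>y. y \<in> S \<Longrightarrow> L (pd is F y) = pd is (\<lambda>y. L (F y)) y"
    using pd_bounded_linear[OF assms(1) S smooth_on_pd_differentiable[OF assms(2)]] by simp
  moreover have "(\<lambda>y. L (pd is F y)) differentiable (at x)"
    using smooth_on_pd_differentiable[OF assms(2) x] bounded_linear.has_derivative[OF assms(1)]
    unfolding differentiable_def by blast
  ultimately show "pd is (\<lambda>y. L (F y)) differentiable (at x)"
    using differentiable_transform_open[OF S x, of "\<lambda>y. L (pd is F y)"] by blast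
qed

lemma smooth_on_uminus: "smooth_on S g \<Longrightarrow> smooth_on S (\<lambda>y. - g y)"
  by (rule smooth_on_bounded_linear[OF bounded_linear_minus[OF bounded_linear_ident]])

lemma smooth_on_diff:
  assumes "smooth_on S f" "smooth_on S g"
  shows "smooth_on S (\<lambda>y. f y - g y)"
  using smooth_on_add[OF assms(1) smooth_on_uminus[OF assms(2)]] by simp

lemma smooth_on_component: "smooth_on S F \<Longrightarrow> smooth_on S (\<lambda>y. F y $ i)"
  by (rule smooth_on_bounded_linear[OF bounded_linear_vec_nth])

lemma pd_component:
  assumes "smooth_on S F" "x \<in> S"
  shows "pd is (\<lambda>y. F y $ i) x = pd is F x $ i"
  using pd_bounded_linear[OF bounded_linear_vec_nth smooth_on_open[OF assms(1)] _ assms(2)]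
    smooth_on_pd_differentiable[OF assms(1)] by blast

lemma pd_single_bilinear:
  assumes bb: "bounded_bilinear bp" and "f differentiable (at x)" "g differentiable (at x)"
  shows "pd [j] (\<lambda>y. bp (f y) (g y)) x = bp (f x) (pd [j] g x) + bp (pd [j] f x) (g x)"
proof -
  have "((\<lambda>y. bp (f y) (g y)) has_derivative
      (\<lambda>h. bp (f x) (frechet_derivative g (at x) h) + bp (frechet_derivative f (at x) h) (g x))) (at x)"
    by (rule bounded_bilinear.FDERIV[OF bb]) (use assms frechet_derivative_works in blast)+
  from pd_single_eq[OF this] show ?thesis by simp
qed

lemma pd_bilinear_differentiable:
  assumes bb: "bounded_bilinear bp"
  shows "smooth_on S f \<Longrightarrow> smooth_on S g \<Longrightarrow> x \<in> S \<Longrightarrow> pd is (\<lambda>y. bp (f y) (g y)) differentiable (at x)"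
proof (induction "is" arbitrary: f g x rule: length_induct)
  case (1 "is")
  have IH: "pd ks (\<lambda>y. bp (f' y) (g' y)) differentiable (at y)"
    if "length ks < length is" "smooth_on S f'" "smooth_on S g'" "y \<in> S" for ks f' g' y
    using "1.IH" that by blast
  have S: "open S" using "1.prems"(1) by (rule smooth_on_open)
  show ?case
  proof (cases "is" rule: rev_cases)
    case Nil
    then show ?thesis
      using bounded_bilinear.FDERIV[OF bb] smooth_on_differentiable[OF "1.prems"(1,3)]
        smooth_on_differentiable[OF "1.prems"(2,3)]
      unfolding differentiable_def by fastforce
  next
    case (snoc js j)
    define F1 where "F1 = (\<lambda>y. bp (f y) (pd [j] g y))"
    define F2 where "F2 = (\<lambda>y. bp (pd [j] f y) (g y))"
    have F12: "pd ks F1 differentiable (at y) \<and> pd ks F2 differentiable (at y)"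
      if "length ks \<le> length js" "y \<in> S" for ks y
      unfolding F1_def F2_def using that snoc
      by (intro conjI IH "1.prems"(1,2) smooth_on_pd) auto
    have "pd [j] (\<lambda>y. bp (f y) (g y)) y = F1 y + F2 y" if "y \<in> S" for y
      unfolding F1_def F2_def
      by (rule pd_single_bilinear[OF bb smooth_on_differentiable[OF "1.prems"(1) that]
            smooth_on_differentiable[OF "1.prems"(2) that]])
    then have "pd js F1 y + pd js F2 y = pd is (\<lambda>y. bp (f y) (g y)) y" if "y \<in> S" for y
      using pd_cong_open[OF S, of "\<lambda>y. F1 y + F2 y" "pd [j] (\<lambda>y. bp (f y) (g y))" y js]
        pd_add[OF S _ that, of js F1 F2] F12 that
      by (simp add: snoc pd_append)
    moreover have "(\<lambda>y. pd js F1 y + pd js F2 y) differentiable (at x)"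
      using F12 "1.prems"(3) by (intro differentiable_add) auto
    ultimately show ?thesis
      using differentiable_transform_open[OF S "1.prems"(3), of "\<lambda>y. pd js F1 y + pd js F2 y"] by blast
  qed
qed

lemma smooth_on_bilinear:
  assumes "bounded_bilinear bp" "smooth_on S f" "smooth_on S g"
  shows "smooth_on S (\<lambda>y. bp (f y) (g y))"
  using smooth_on_open[OF assms(2)] pd_bilinear_differentiable[OF assms]
  unfolding smooth_on_def by blast

lemma smooth_on_mult:
  fixes f g :: "real^'n::finite \<Rightarrow> real"
  shows "smooth_on S f \<Longrightarrow> smooth_on S g \<Longrightarrow> smooth_on S (\<lambda>y. f y * g y)"
  by (rule smooth_on_bilinear[OF bounded_bilinear_mult])

lemma smooth_on_scaleR:
  fixes f :: "real^'n::finite \<Rightarrow> real"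
  shows "smooth_on S f \<Longrightarrow> smooth_on S g \<Longrightarrow> smooth_on S (\<lambda>y. f y *\<^sub>R g y)"
  by (rule smooth_on_bilinear[OF bounded_bilinear_scaleR])

lemma smooth_on_inner:
  shows "smooth_on S f \<Longrightarrow> smooth_on S g \<Longrightarrow> smooth_on S (\<lambda>y. inner (f y) (g y))"
  by (rule smooth_on_bilinear[OF bounded_bilinear_inner])

lemma smooth_on_cross3:
  shows "smooth_on S f \<Longrightarrow> smooth_on S g \<Longrightarrow> smooth_on S (\<lambda>y. cross3 (f y) (g y))"
  by (rule smooth_on_bilinear) (simp add: bilinear_cross flip: bilinear_conv_bounded_bilinear)

lemma smooth_on_vecI:
  fixes F :: "real^'n::finite \<Rightarrow> real^'m::finite"
  assumes "open S" "\<And>i. smooth_on S (\<lambda>y. F y $ i)"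
  shows "smooth_on S F"
proof -
  have "smooth_on S (\<lambda>y. \<Sum>i\<in>UNIV. (F y $ i) *\<^sub>R axis i (1::real))"
    by (intro smooth_on_sum[OF assms(1)] smooth_on_scaleR assms(2) smooth_on_const[OF assms(1)])
  then show ?thesis by (simp add: axis_expansion)
qed

lemma has_derivative_mult_inverse_power:
  fixes a g :: "real^'n::finite \<Rightarrow> real"
  assumes "a differentiable (at x)" "g differentiable (at x)" "g x \<noteq> 0"
  shows "((\<lambda>x. a x * inverse (g x) ^ n) has_derivative
    (\<lambda>v. (frechet_derivative a (at x) v * g x - of_nat n * a x * frechet_derivative g (at x) v)
          * inverse (g x) ^ Suc n)) (at x)"
proof -
  have "((\<lambda>x. a x * inverse (g x) ^ n) has_derivative (\<lambda>v. frechet_derivative a (at x) v * inverse (g x) ^ n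
      + a x * (of_nat n * (- (inverse (g x) * frechet_derivative g (at x) v * inverse (g x))) * inverse (g x) ^ (n - 1)))) (at x)"
    using assms by (auto intro!: derivative_eq_intros simp: frechet_derivative_works[symmetric])
  moreover have "frechet_derivative a (at x) v * inverse (g x) ^ n
      + a x * (of_nat n * (- (inverse (g x) * frechet_derivative g (at x) v * inverse (g x))) * inverse (g x) ^ (n - 1))
    = (frechet_derivative a (at x) v * g x - of_nat n * a x * frechet_derivative g (at x) v) * inverse (g x) ^ Suc n" for v
    using assms(3) by (cases n) (simp_all add: field_simps)
  ultimately show ?thesis by simp
qed

text \<open>Every partial derivative of \<open>a / g\<^sup>n\<close> has the form \<open>a' / g\<^sup>n\<^sup>+\<^sup>1\<close> with \<open>a'\<close> smooth.\<close>

lemma smooth_on_inverse: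
  fixes g :: "real^'n::finite \<Rightarrow> real"
  assumes g: "smooth_on S g" and nz: "\<And>x. x \<in> S \<Longrightarrow> g x \<noteq> 0"
  shows "smooth_on S (\<lambda>x. inverse (g x))"
proof -
  have S: "open S" using g by (rule smooth_on_open)
  let ?P = "\<lambda>q. \<exists>a n. smooth_on S a \<and> (\<forall>x\<in>S. q x = a x * inverse (g x) ^ n)"
  show ?thesis
  proof (rule smooth_onI_coinduct[OF S, of ?P])
    show "?P (\<lambda>x. inverse (g x))"
      by (rule exI[of _ "\<lambda>x. 1"], rule exI[of _ 1]) (simp add: smooth_on_const[OF S])
  next
    fix q assume "?P q"
    then obtain a n where a: "smooth_on S a" and q: "\<forall>x\<in>S. q x = a x * inverse (g x) ^ n"
      by blast
    define a' where "a' j x = pd [j] a x * g x - of_nat n * a x * pd [j] g x" for j x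
    have hd: "(q has_derivative (\<lambda>v. (frechet_derivative a (at x) v * g x
        - of_nat n * a x * frechet_derivative g (at x) v) * inverse (g x) ^ Suc n)) (at x)"
      if x: "x \<in> S" for x
      by (rule has_derivative_transform_within_open[OF has_derivative_mult_inverse_power[OF
            smooth_on_differentiable[OF a x] smooth_on_differentiable[OF g x] nz[OF x]] S x])
        (use q in simp)
    have "smooth_on S (a' j)" for j
    proof -
      have "smooth_on S (\<lambda>x. pd [j] a x * g x + (- of_nat n * a x) * pd [j] g x)"
        by (intro smooth_on_add smooth_on_mult smooth_on_pd a g smooth_on_const S)
      then show ?thesis
        by (rule smooth_on_cong) (simp add: a'_def)
    qed
    then have P: "?P (\<lambda>x. a' j x * inverse (g x) ^ Suc n)" for j
      by (intro exI[of _ "a' j"] exI[of _ "Suc n"]) simp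
    have pd_q: "\<forall>x\<in>S. pd [j] q x = a' j x * inverse (g x) ^ Suc n" for j
      using pd_single_eq[OF hd] by (simp add: a'_def)
    show "(\<forall>x\<in>S. q differentiable (at x)) \<and> (\<forall>j. \<exists>g'. ?P g' \<and> (\<forall>x\<in>S. pd [j] q x = g' x))"
    proof (intro conjI allI)
      show "\<forall>x\<in>S. q differentiable (at x)"
        using hd unfolding differentiable_def by blast
      show "\<exists>g'. ?P g' \<and> (\<forall>x\<in>S. pd [j] q x = g' x)" for j
        by (intro exI[of _ "\<lambda>x. a' j x * inverse (g x) ^ Suc n"] conjI P pd_q)
    qed
  qed
qed

lemma has_vector_derivative_along_line:
  assumes "g differentiable (at (a + s *\<^sub>R u))"
  shows "((\<lambda>s. g (a + s *\<^sub>R u)) has_vector_derivative frechet_derivative g (at (a + s *\<^sub>R u)) u) (at s)"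
proof -
  have "((\<lambda>s. a + s *\<^sub>R u) has_derivative (\<lambda>s. s *\<^sub>R u)) (at s)"
    by (auto intro!: derivative_eq_intros)
  then have "((\<lambda>s. g (a + s *\<^sub>R u)) has_derivative (\<lambda>h. frechet_derivative g (at (a + s *\<^sub>R u)) (h *\<^sub>R u))) (at s)"
    by (rule has_derivative_compose) (use assms frechet_derivative_works in blast)
  moreover have "frechet_derivative g (at (a + s *\<^sub>R u)) (h *\<^sub>R u) = h *\<^sub>R frechet_derivative g (at (a + s *\<^sub>R u)) u" for h
    using linear_scale[OF linear_frechet_derivative[OF assms]] by auto
  ultimately show ?thesis unfolding has_vector_derivative_def by simp
qed

lemma has_real_derivative_along_axis:
  fixes g :: "real^'n::finite \<Rightarrow> real"
  assumes "g differentiable (at (a + s *\<^sub>R axis i 1))"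
  shows "((\<lambda>s. g (a + s *\<^sub>R axis i 1)) has_real_derivative pd [i] g (a + s *\<^sub>R axis i 1)) (at s)"
  using has_vector_derivative_along_line[OF assms]
  by (simp add: has_real_derivative_iff_has_vector_derivative)

lemma second_difference_mean_value:
  fixes g :: "real^'n::finite \<Rightarrow> real"
  assumes sm: "smooth_on S g" and ball: "ball x r \<subseteq> S" and t: "0 < t" "2 * t < r"
  shows "\<exists>y. dist y x \<le> 2 * t \<and>
    g (x + t *\<^sub>R axis i 1 + t *\<^sub>R axis j 1) - g (x + t *\<^sub>R axis i 1) - g (x + t *\<^sub>R axis j 1) + g x
      = t\<^sup>2 * pd [j, i] g y"
proof -
  define e where "e = axis i (1::real)"
  define d where "d = axis j (1::real)"
  have norm_ed: "norm e = 1" "norm d = 1"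
    unfolding e_def d_def by (simp_all add: norm_axis_1)
  have dist_le: "dist (x + s *\<^sub>R e + s' *\<^sub>R d) x \<le> s + s'" if "0 \<le> s" "0 \<le> s'" for s s'
    using norm_triangle_ineq[of "s *\<^sub>R e" "s' *\<^sub>R d"] that norm_ed
    by (simp add: dist_norm add.assoc)
  have inS: "x + s *\<^sub>R e + s' *\<^sub>R d \<in> S" if "0 \<le> s" "s \<le> t" "0 \<le> s'" "s' \<le> t" for s s'
    using dist_le[of s s'] that t ball by (auto simp: dist_commute subset_iff)
  define \<phi> where "\<phi> s = g (x + t *\<^sub>R d + s *\<^sub>R e) - g (x + s *\<^sub>R e)" for s
  have d\<phi>: "(\<phi> has_real_derivative (pd [i] g (x + t *\<^sub>R d + s *\<^sub>R e) - pd [i] g (x + s *\<^sub>R e))) (at s)"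
    if "0 \<le> s" "s \<le> t" for s
  proof -
    have "x + t *\<^sub>R d + s *\<^sub>R e \<in> S" "x + s *\<^sub>R e \<in> S"
      using inS[of s t] inS[of s 0] that t by (simp_all add: algebra_simps)
    note in_S = this[unfolded e_def]
    show ?thesis
      unfolding \<phi>_def e_def
      by (intro DERIV_diff has_real_derivative_along_axis smooth_on_differentiable[OF sm] in_S)
  qed
  obtain \<sigma> where \<sigma>: "0 < \<sigma>" "\<sigma> < t"
    "\<phi> t - \<phi> 0 = (t - 0) * (pd [i] g (x + t *\<^sub>R d + \<sigma> *\<^sub>R e) - pd [i] g (x + \<sigma> *\<^sub>R e))"
    using MVT2[of 0 t \<phi> "\<lambda>s. pd [i] g (x + t *\<^sub>R d + s *\<^sub>R e) - pd [i] g (x + s *\<^sub>R e)"] d\<phi> t by auto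
  define \<psi> where "\<psi> s = pd [i] g (x + \<sigma> *\<^sub>R e + s *\<^sub>R d)" for s
  have d\<psi>: "(\<psi> has_real_derivative pd [j, i] g (x + \<sigma> *\<^sub>R e + s *\<^sub>R d)) (at s)"
    if "0 \<le> s" "s \<le> t" for s
  proof -
    have "x + \<sigma> *\<^sub>R e + s *\<^sub>R d \<in> S" using inS[of \<sigma> s] that \<sigma> by simp
    note in_S = this[unfolded d_def]
    have "(\<psi> has_real_derivative pd [j] (pd [i] g) (x + \<sigma> *\<^sub>R e + s *\<^sub>R d)) (at s)"
      unfolding \<psi>_def d_def
      by (intro has_real_derivative_along_axis smooth_on_differentiable[OF smooth_on_pd[OF sm] in_S])
    then show ?thesis by simp
  qed
  obtain \<tau> where \<tau>: "0 < \<tau>" "\<tau> < t" "\<psi> t - \<psi> 0 = (t - 0) * pd [j, i] g (x + \<sigma> *\<^sub>R e + \<tau> *\<^sub>R d)"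
    using MVT2[of 0 t \<psi> "\<lambda>s. pd [j, i] g (x + \<sigma> *\<^sub>R e + s *\<^sub>R d)"] d\<psi> t by auto
  have "g (x + t *\<^sub>R e + t *\<^sub>R d) - g (x + t *\<^sub>R e) - g (x + t *\<^sub>R d) + g x = \<phi> t - \<phi> 0"
    unfolding \<phi>_def by (simp add: algebra_simps)
  also have "\<dots> = t * (\<psi> t - \<psi> 0)"
    using \<sigma>(3) unfolding \<psi>_def by (simp add: algebra_simps)
  also have "\<dots> = t\<^sup>2 * pd [j, i] g (x + \<sigma> *\<^sub>R e + \<tau> *\<^sub>R d)"
    using \<tau>(3) by (simp add: power2_eq_square)
  finally show ?thesis
    using dist_le[of \<sigma> \<tau>] \<sigma> \<tau> unfolding e_def d_def by (intro exI[of _ "x + \<sigma> *\<^sub>R e + \<tau> *\<^sub>R d"]) (auto simp: e_def d_def)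
qed

lemma pd_swap_real:
  fixes g :: "real^'n::finite \<Rightarrow> real"
  assumes sm: "smooth_on S g" and x: "x \<in> S"
  shows "pd [i, j] g x = pd [j, i] g x"
proof (rule ccontr)
  assume ne: "pd [i, j] g x \<noteq> pd [j, i] g x"
  define \<epsilon> where "\<epsilon> = \<bar>pd [i, j] g x - pd [j, i] g x\<bar> / 2"
  have \<epsilon>: "\<epsilon> > 0" using ne unfolding \<epsilon>_def by simp
  obtain r where r: "r > 0" "ball x r \<subseteq> S"
    using smooth_on_open[OF sm] x open_contains_ball by blast
  obtain d1 where d1: "d1 > 0" "\<And>y. dist y x < d1 \<Longrightarrow> dist (pd [j, i] g y) (pd [j, i] g x) < \<epsilon>"
    using smooth_on_isCont[OF smooth_on_pd[OF sm] x] \<epsilon> unfolding continuous_at_eps_delta by blast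
  obtain d2 where d2: "d2 > 0" "\<And>y. dist y x < d2 \<Longrightarrow> dist (pd [i, j] g y) (pd [i, j] g x) < \<epsilon>"
    using smooth_on_isCont[OF smooth_on_pd[OF sm] x] \<epsilon> unfolding continuous_at_eps_delta by blast
  define t where "t = min r (min d1 d2) / 4"
  have t: "0 < t" "2 * t < r" "2 * t < d1" "2 * t < d2"
    using r d1 d2 unfolding t_def by auto
  obtain y where y: "dist y x \<le> 2 * t"
    "g (x + t *\<^sub>R axis i 1 + t *\<^sub>R axis j 1) - g (x + t *\<^sub>R axis i 1) - g (x + t *\<^sub>R axis j 1) + g x
      = t\<^sup>2 * pd [j, i] g y"
    using second_difference_mean_value[OF sm r(2) t(1,2), of i j] by blast
  obtain z where z: "dist z x \<le> 2 * t"
    "g (x + t *\<^sub>R axis j 1 + t *\<^sub>R axis i 1) - g (x + t *\<^sub>R axis j 1) - g (x + t *\<^sub>R axis i 1) + g x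
      = t\<^sup>2 * pd [i, j] g z"
    using second_difference_mean_value[OF sm r(2) t(1,2), of j i] by blast
  have "t\<^sup>2 * pd [j, i] g y = t\<^sup>2 * pd [i, j] g z"
    using y(2) z(2) by (simp add: algebra_simps)
  then have yz: "pd [j, i] g y = pd [i, j] g z"
    using t(1) by simp
  have "dist (pd [j, i] g y) (pd [j, i] g x) < \<epsilon>" "dist (pd [i, j] g z) (pd [i, j] g x) < \<epsilon>"
    using d1(2) y(1) d2(2) z(1) t by simp_all
  then have "\<bar>pd [i, j] g x - pd [j, i] g x\<bar> < 2 * \<epsilon>"
    using yz unfolding dist_real_def by linarith
  then show False
    unfolding \<epsilon>_def by simp
qed

lemma pd_swap:
  fixes F :: "real^'n::finite \<Rightarrow> real^'m::finite"
  assumes "smooth_on S F" "x \<in> S"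
  shows "pd [i, j] F x = pd [j, i] F x"
proof -
  have "pd [i, j] F x $ k = pd [j, i] F x $ k" for k
    using pd_swap_real[OF smooth_on_component[OF assms(1)] assms(2), of i j k] pd_component[OF assms]
    by metis
  then show ?thesis by (simp add: vec_eq_iff)
qed

section \<open>Jets and Taylor expansion along lines\<close>

definition higher_diff :: "nat \<Rightarrow> (real^'n::finite \<Rightarrow> 'b::real_normed_vector) \<Rightarrow> real^'n \<Rightarrow> real^'n \<Rightarrow> 'b" where
  "higher_diff m V x u = (\<Sum>is\<in>{is::'n list. length is = m}. (\<Prod>i\<leftarrow>is. u $ i) *\<^sub>R pd is V x)"

lemma jet_eq_higher_diff: "jet k V r x = (\<Sum>m\<le>k. inverse (fact m) *\<^sub>R higher_diff m V r (x - r))"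
  unfolding jet_def higher_diff_def by (simp add: scaleR_sum_right)

lemma higher_diff_scaleR: "higher_diff m V x (t *\<^sub>R u) = t ^ m *\<^sub>R higher_diff m V x u"
proof -
  have prod: "(\<Prod>i\<leftarrow>is. (t *\<^sub>R u) $ i) = t ^ length is * (\<Prod>i\<leftarrow>is. u $ i)" for "is"
    by (induction "is") (auto simp: algebra_simps)
  show ?thesis
    unfolding higher_diff_def scaleR_sum_right prod by (intro sum.cong) auto
qed

lemma higher_diff_0: "higher_diff 0 V x u = V x"
  by (simp add: higher_diff_def)

lemma higher_diff_Suc:
  "higher_diff (Suc m) V x u
    = (\<Sum>is\<in>{is::'n::finite list. length is = m}. (\<Prod>i\<leftarrow>is. u $ i) *\<^sub>R (\<Sum>i\<in>UNIV. u$i *\<^sub>R pd (i # is) V x))"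
proof -
  have lists_Suc: "{js::'n list. length js = Suc m} = (\<lambda>(i, is). i # is) ` (UNIV \<times> {is. length is = m})"
    by (auto simp: length_Suc_conv image_iff)
  have inj: "inj_on (\<lambda>(i, is). i # is) (UNIV \<times> {is::'n list. length is = m})"
    by (auto simp: inj_on_def)
  have "higher_diff (Suc m) V x u
      = (\<Sum>(i, is)\<in>UNIV \<times> {is::'n list. length is = m}. (u $ i * (\<Prod>i\<leftarrow>is. u $ i)) *\<^sub>R pd (i # is) V x)"
    unfolding higher_diff_def lists_Suc sum.reindex[OF inj] by (simp add: case_prod_beta comp_def)
  also have "\<dots> = (\<Sum>i\<in>UNIV. \<Sum>is\<in>{is::'n list. length is = m}. (u $ i * (\<Prod>i\<leftarrow>is. u $ i)) *\<^sub>R pd (i # is) V x)"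
    by (simp add: sum.cartesian_product)
  also have "\<dots> = (\<Sum>is\<in>{is::'n list. length is = m}. \<Sum>i\<in>UNIV. (u $ i * (\<Prod>i\<leftarrow>is. u $ i)) *\<^sub>R pd (i # is) V x)"
    by (rule sum.swap)
  finally show ?thesis
    by (simp add: scaleR_sum_right mult.commute)
qed

lemma has_vector_derivative_higher_diff:
  assumes sm: "smooth_on S V" and y: "a + s *\<^sub>R u \<in> S"
  shows "((\<lambda>s. higher_diff m V (a + s *\<^sub>R u) u) has_vector_derivative higher_diff (Suc m) V (a + s *\<^sub>R u) u) (at s)"
proof -
  have "((\<lambda>s. pd is V (a + s *\<^sub>R u)) has_vector_derivative (\<Sum>i\<in>UNIV. u$i *\<^sub>R pd (i # is) V (a + s *\<^sub>R u))) (at s)"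
    for "is"
    using has_vector_derivative_along_line[OF smooth_on_pd_differentiable[OF sm y]]
      frechet_derivative_axis_expansion[OF smooth_on_pd_differentiable[OF sm y], where v = u] by simp
  then show ?thesis
    unfolding higher_diff_def higher_diff_Suc[unfolded higher_diff_def]
    by (intro has_vector_derivative_sum bounded_linear.has_vector_derivative[OF bounded_linear_scaleR_right])
qed

lemma jet_along_line: "jet k V r (r + t *\<^sub>R u) = (\<Sum>m\<le>k. t ^ m *\<^sub>R (inverse (fact m) *\<^sub>R higher_diff m V r u))"
  unfolding jet_eq_higher_diff by (simp add: higher_diff_scaleR mult.commute)

lemma jet_0: "jet 0 V r = (\<lambda>x. V r)"
  by (simp add: fun_eq_iff jet_eq_higher_diff higher_diff_0)

definition smallo_pow :: "nat \<Rightarrow> (real \<Rightarrow> 'b::real_normed_vector) \<Rightarrow> bool" where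
  "smallo_pow k F \<longleftrightarrow> ((\<lambda>t. (1 / t ^ k) *\<^sub>R F t) \<longlongrightarrow> 0) (at 0)"

lemma smallo_pow_diff: "smallo_pow k F \<Longrightarrow> smallo_pow k G \<Longrightarrow> smallo_pow k (\<lambda>t. F t - G t)"
  unfolding smallo_pow_def by (simp add: scaleR_diff_right tendsto_diff[of _ 0 _ _ 0, simplified])

lemma smallo_pow_monomial: "smallo_pow k (\<lambda>t. t ^ k *\<^sub>R c) \<Longrightarrow> c = 0"
proof -
  assume "smallo_pow k (\<lambda>t. t ^ k *\<^sub>R c)"
  moreover have "\<forall>\<^sub>F t in at (0::real). (1 / t ^ k) *\<^sub>R (t ^ k *\<^sub>R c) = c"
    by (simp add: eventually_at_filter)
  ultimately have "((\<lambda>t::real. c) \<longlongrightarrow> 0) (at 0)"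
    unfolding smallo_pow_def by (rule Lim_transform_eventually)
  then show "c = 0" by (rule LIM_const_eq)
qed

lemma smallo_pow_polynomial: "smallo_pow k (\<lambda>t. \<Sum>m\<le>k. t ^ m *\<^sub>R c m) \<Longrightarrow> \<forall>m\<le>k. c m = 0"
proof (induction k)
  case 0
  then show ?case using smallo_pow_monomial[of 0 "c 0"] by simp
next
  case (Suc k)
  define Q where "Q t = (\<Sum>m\<le>k. t ^ m *\<^sub>R c m)" for t :: real
  have P: "(\<Sum>m\<le>Suc k. t ^ m *\<^sub>R c m) = Q t + t ^ Suc k *\<^sub>R c (Suc k)" for t :: real
    unfolding Q_def by simp
  have "((\<lambda>t. t *\<^sub>R ((1 / t ^ Suc k) *\<^sub>R (\<Sum>m\<le>Suc k. t ^ m *\<^sub>R c m)) - t *\<^sub>R c (Suc k))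
      \<longlongrightarrow> 0 *\<^sub>R 0 - 0 *\<^sub>R c (Suc k)) (at 0)"
    using Suc.prems unfolding smallo_pow_def
    by (intro tendsto_diff tendsto_scaleR tendsto_ident_at tendsto_const) auto
  moreover have "\<forall>\<^sub>F t in at (0::real).
      t *\<^sub>R ((1 / t ^ Suc k) *\<^sub>R (\<Sum>m\<le>Suc k. t ^ m *\<^sub>R c m)) - t *\<^sub>R c (Suc k) = (1 / t ^ k) *\<^sub>R Q t"
    by (simp add: eventually_at_filter P Q_def scaleR_add_right field_simps)
  ultimately have "smallo_pow k Q"
    unfolding smallo_pow_def by (auto elim: Lim_transform_eventually)
  then have ck: "\<forall>m\<le>k. c m = 0"
    using Suc.IH unfolding Q_def by blast
  then have "smallo_pow (Suc k) (\<lambda>t. t ^ Suc k *\<^sub>R c (Suc k))"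
    using Suc.prems P by (simp add: Q_def)
  then have "c (Suc k) = 0" by (rule smallo_pow_monomial)
  then show ?case using ck le_Suc_eq by auto
qed

lemma jet_eq_0_iff_higher_diff: "jet k V r = (\<lambda>_. 0) \<longleftrightarrow> (\<forall>u. \<forall>m\<le>k. higher_diff m V r u = 0)"
proof
  assume jet0: "jet k V r = (\<lambda>_. 0)"
  show "\<forall>u. \<forall>m\<le>k. higher_diff m V r u = 0"
  proof (rule allI)
    fix u
    have "smallo_pow k (\<lambda>t. \<Sum>m\<le>k. t ^ m *\<^sub>R (inverse (fact m) *\<^sub>R higher_diff m V r u))"
      using jet0 jet_along_line[of k V r _ u, symmetric] by (simp add: smallo_pow_def fun_eq_iff)
    then show "\<forall>m\<le>k. higher_diff m V r u = 0"
      using smallo_pow_polynomial by fastforce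
  qed
qed (simp add: fun_eq_iff jet_eq_higher_diff)

lemma taylor_remainder_bound:
  fixes V :: "real^'n::finite \<Rightarrow> real^'m::finite"
  assumes sm: "smooth_on S V" and d: "d > 0" and inS: "\<And>s. \<bar>s\<bar> \<le> d \<Longrightarrow> r + s *\<^sub>R u \<in> S"
  obtains M where "\<And>t. \<bar>t\<bar> \<le> d \<Longrightarrow> \<bar>V (r + t *\<^sub>R u) $ j - jet k V r (r + t *\<^sub>R u) $ j\<bar> \<le> M * \<bar>t\<bar> ^ Suc k"
proof -
  define D where "D m s = higher_diff m V (r + s *\<^sub>R u) u $ j" for m s
  have D: "(D m has_real_derivative D (Suc m) s) (at s)" if "\<bar>s\<bar> \<le> d" for m s
    unfolding D_def has_real_derivative_iff_has_vector_derivative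
    by (rule bounded_linear.has_vector_derivative[OF bounded_linear_vec_nth
          has_vector_derivative_higher_diff[OF sm inS[OF that]]])
  have "continuous_on {-d..d} (D (Suc k))"
    by (rule continuous_at_imp_continuous_on) (use D DERIV_isCont in force)
  then have "bounded (D (Suc k) ` {-d..d})"
    by (intro compact_imp_bounded compact_continuous_image compact_Icc)
  then obtain M where M: "\<And>s. s \<in> {-d..d} \<Longrightarrow> norm (D (Suc k) s) \<le> M"
    unfolding bounded_iff by blast
  show ?thesis
  proof (rule that[of "M / fact k"])
    fix t :: real assume t: "\<bar>t\<bar> \<le> d"
    have "norm (D 0 t - (\<Sum>i\<le>k. D i 0 * (t - 0) ^ i / fact i)) \<le> M * norm (t - 0) ^ Suc k / fact k"
      by (rule field_Taylor[where S = "{-d..d}"]) (use D M t d in \<open>auto intro: has_field_derivative_at_within\<close>)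
    moreover have "D 0 t = V (r + t *\<^sub>R u) $ j" "(\<Sum>i\<le>k. D i 0 * (t - 0) ^ i / fact i) = jet k V r (r + t *\<^sub>R u) $ j"
      unfolding D_def jet_along_line by (simp_all add: higher_diff_0 field_simps)
    ultimately show "\<bar>V (r + t *\<^sub>R u) $ j - jet k V r (r + t *\<^sub>R u) $ j\<bar> \<le> M / fact k * \<bar>t\<bar> ^ Suc k"
      by simp
  qed
qed

lemma taylor_remainder_smallo:
  fixes V :: "real^'n::finite \<Rightarrow> real^'m::finite"
  assumes sm: "smooth_on S V" and r: "r \<in> S"
  shows "smallo_pow k (\<lambda>t. V (r + t *\<^sub>R u) - jet k V r (r + t *\<^sub>R u))"
proof -
  obtain e where e: "e > 0" "ball r e \<subseteq> S"
    using smooth_on_open[OF sm] r open_contains_ball by blast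
  have nu: "norm u + 1 > 0" by (simp add: add_nonneg_pos)
  define d where "d = e / (norm u + 1)"
  have d: "d > 0" unfolding d_def using e(1) nu by (rule divide_pos_pos)
  have inS: "r + s *\<^sub>R u \<in> S" if "\<bar>s\<bar> \<le> d" for s
  proof -
    have "norm (s *\<^sub>R u) \<le> d * norm u" using that by (simp add: mult_right_mono)
    also have "\<dots> < e" using e(1) nu unfolding d_def by (simp add: field_simps)
    finally show ?thesis using e(2) by (auto simp: dist_norm)
  qed
  have "\<exists>M. \<forall>t. \<bar>t\<bar> \<le> d \<longrightarrow> \<bar>V (r + t *\<^sub>R u) $ j - jet k V r (r + t *\<^sub>R u) $ j\<bar> \<le> M * \<bar>t\<bar> ^ Suc k" for j
    using taylor_remainder_bound[OF sm d inS] by blast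
  then obtain M where M: "\<And>j t. \<bar>t\<bar> \<le> d \<Longrightarrow> \<bar>V (r + t *\<^sub>R u) $ j - jet k V r (r + t *\<^sub>R u) $ j\<bar> \<le> M j * \<bar>t\<bar> ^ Suc k"
    by metis
  define F where "F t = V (r + t *\<^sub>R u) - jet k V r (r + t *\<^sub>R u)" for t
  have "norm ((1 / t ^ k) *\<^sub>R F t) \<le> (\<Sum>j\<in>UNIV. M j) * \<bar>t\<bar>" if t: "t \<noteq> 0" "\<bar>t\<bar> \<le> d" for t
  proof -
    have "norm (F t) \<le> (\<Sum>j\<in>UNIV. \<bar>F t $ j\<bar>)" by (rule norm_le_l1_cart)
    also have "\<dots> \<le> (\<Sum>j\<in>UNIV. M j * \<bar>t\<bar> ^ Suc k)"
      by (rule sum_mono) (use M t in \<open>simp add: F_def\<close>)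
    finally have "norm (F t) \<le> (\<Sum>j\<in>UNIV. M j) * \<bar>t\<bar> ^ Suc k" by (simp add: sum_distrib_right)
    then have "norm (F t) / \<bar>t\<bar> ^ k \<le> (\<Sum>j\<in>UNIV. M j) * \<bar>t\<bar> ^ Suc k / \<bar>t\<bar> ^ k"
      by (rule divide_right_mono) simp
    also have "\<dots> = (\<Sum>j\<in>UNIV. M j) * \<bar>t\<bar>" using t by (simp add: field_simps)
    finally show ?thesis by (simp add: power_abs divide_inverse mult.commute)
  qed
  then have "\<forall>\<^sub>F t in at 0. norm ((1 / t ^ k) *\<^sub>R F t) \<le> (\<Sum>j\<in>UNIV. M j) * \<bar>t\<bar>"
    unfolding eventually_at using d by (intro exI[of _ d]) auto
  moreover have "((\<lambda>t::real. (\<Sum>j\<in>UNIV. M j) * \<bar>t\<bar>) \<longlongrightarrow> 0) (at 0)"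
    by (auto intro!: tendsto_eq_intros)
  ultimately have "((\<lambda>t. (1 / t ^ k) *\<^sub>R F t) \<longlongrightarrow> 0) (at 0)"
    by (rule Lim_null_comparison)
  then show ?thesis unfolding smallo_pow_def F_def .
qed

lemma jet_eq_0_iff_smallo:
  fixes V :: "real^'n::finite \<Rightarrow> real^'m::finite"
  assumes sm: "smooth_on S V" and r: "r \<in> S"
  shows "jet k V r = (\<lambda>_. 0) \<longleftrightarrow> (\<forall>u. smallo_pow k (\<lambda>t. V (r + t *\<^sub>R u)))"
proof
  assume "jet k V r = (\<lambda>_. 0)"
  then show "\<forall>u. smallo_pow k (\<lambda>t. V (r + t *\<^sub>R u))"
    using taylor_remainder_smallo[OF sm r, of k] by simp
next
  assume small: "\<forall>u. smallo_pow k (\<lambda>t. V (r + t *\<^sub>R u))"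
  have "\<forall>m\<le>k. inverse (fact m) *\<^sub>R higher_diff m V r u = 0" for u
  proof (rule smallo_pow_polynomial)
    have "smallo_pow k (\<lambda>t. V (r + t *\<^sub>R u) - (V (r + t *\<^sub>R u) - jet k V r (r + t *\<^sub>R u)))"
      by (intro smallo_pow_diff small[rule_format] taylor_remainder_smallo[OF sm r])
    then show "smallo_pow k (\<lambda>t. \<Sum>m\<le>k. t ^ m *\<^sub>R (inverse (fact m) *\<^sub>R higher_diff m V r u))"
      by (simp add: jet_along_line)
  qed
  then show "jet k V r = (\<lambda>_. 0)"
    unfolding jet_eq_0_iff_higher_diff by auto
qed

lemma tendsto_jet_Suc:
  fixes V :: "real^'n::finite \<Rightarrow> real^'m::finite"
  assumes sm: "smooth_on S V" and r: "r \<in> S" and jet0: "jet k V r = (\<lambda>_. 0)"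
  shows "((\<lambda>t. (1 / t ^ Suc k) *\<^sub>R V (r + t *\<^sub>R u)) \<longlongrightarrow> jet (Suc k) V r (r + u)) (at 0)"
proof -
  define c where "c = inverse (fact (Suc k)) *\<^sub>R higher_diff (Suc k) V r u"
  have "\<forall>m\<le>k. higher_diff m V r u = 0"
    using jet0 unfolding jet_eq_0_iff_higher_diff by blast
  then have jet_line: "jet (Suc k) V r (r + t *\<^sub>R u) = t ^ Suc k *\<^sub>R c" for t
    unfolding jet_along_line c_def by simp
  have "((\<lambda>t. (1 / t ^ Suc k) *\<^sub>R (V (r + t *\<^sub>R u) - jet (Suc k) V r (r + t *\<^sub>R u)) + c) \<longlongrightarrow> 0 + c) (at 0)"
    using taylor_remainder_smallo[OF sm r, of "Suc k" u] unfolding smallo_pow_def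
    by (intro tendsto_add tendsto_const)
  then have "((\<lambda>t. (1 / t ^ Suc k) *\<^sub>R (V (r + t *\<^sub>R u) - jet (Suc k) V r (r + t *\<^sub>R u)) + c) \<longlongrightarrow> c) (at 0)"
    by simp
  moreover have "\<forall>\<^sub>F t in at (0::real).
      (1 / t ^ Suc k) *\<^sub>R (V (r + t *\<^sub>R u) - jet (Suc k) V r (r + t *\<^sub>R u)) + c = (1 / t ^ Suc k) *\<^sub>R V (r + t *\<^sub>R u)"
    by (simp add: eventually_at_filter jet_line scaleR_diff_right)
  ultimately have "((\<lambda>t. (1 / t ^ Suc k) *\<^sub>R V (r + t *\<^sub>R u)) \<longlongrightarrow> c) (at 0)"
    by (rule Lim_transform_eventually)
  moreover have "jet (Suc k) V r (r + u) = c"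
    using jet_line[of 1] by simp
  ultimately show ?thesis by simp
qed

section \<open>Jets of maps related by a continuous family of linear maps\<close>

definition cont_linear_family ::
  "(real^'n::finite) set \<Rightarrow> real^'n \<Rightarrow> (real^'n \<Rightarrow> real^'m::finite \<Rightarrow> real^'k::finite) \<Rightarrow> bool" where
  "cont_linear_family S r L \<longleftrightarrow> (\<forall>p\<in>S. linear (L p)) \<and> (\<forall>j. isCont (\<lambda>p. L p (axis j 1)) r)"

lemma tendsto_line:
  fixes r u :: "'a::real_normed_vector"
  shows "((\<lambda>t. r + t *\<^sub>R u) \<longlongrightarrow> r) (at (0::real))"
proof -
  have "((\<lambda>t. r + t *\<^sub>R u) \<longlongrightarrow> r + 0 *\<^sub>R u) (at (0::real))"
    by (intro tendsto_add tendsto_const tendsto_scaleR tendsto_ident_at)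
  then show ?thesis by simp
qed

lemma eventually_line_in_open:
  fixes r u :: "'a::real_normed_vector"
  assumes "open S" "r \<in> S"
  shows "\<forall>\<^sub>F t in at (0::real). r + t *\<^sub>R u \<in> S"
  using topological_tendstoD[OF tendsto_line assms] .

lemma tendsto_cont_linear_family:
  assumes L: "cont_linear_family S r L" and S: "open S" "r \<in> S"
    and F: "(F \<longlongrightarrow> c) (at (0::real))"
  shows "((\<lambda>t. L (r + t *\<^sub>R u) (F t)) \<longlongrightarrow> L r c) (at 0)"
proof -
  have lin: "\<And>p. p \<in> S \<Longrightarrow> linear (L p)" and cont: "\<And>j. isCont (\<lambda>p. L p (axis j 1)) r"
    using L unfolding cont_linear_family_def by auto
  have "((\<lambda>t. L (r + t *\<^sub>R u) (axis j 1)) \<longlongrightarrow> L r (axis j 1)) (at 0)" for j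
    using isCont_tendsto_compose[OF cont tendsto_line] .
  then have "((\<lambda>t. \<Sum>j\<in>UNIV. (F t $ j) *\<^sub>R L (r + t *\<^sub>R u) (axis j 1))
      \<longlongrightarrow> (\<Sum>j\<in>UNIV. (c $ j) *\<^sub>R L r (axis j 1))) (at 0)"
    by (intro tendsto_sum tendsto_scaleR tendsto_vec_nth F)
  moreover have "\<forall>\<^sub>F t in at (0::real).
      (\<Sum>j\<in>UNIV. (F t $ j) *\<^sub>R L (r + t *\<^sub>R u) (axis j 1)) = L (r + t *\<^sub>R u) (F t)"
    using eventually_line_in_open[OF S, of u]
    by (rule eventually_mono) (simp add: linear_axis_expansion[OF lin, symmetric])
  ultimately have "((\<lambda>t. L (r + t *\<^sub>R u) (F t)) \<longlongrightarrow> (\<Sum>j\<in>UNIV. (c $ j) *\<^sub>R L r (axis j 1))) (at 0)"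
    by (rule Lim_transform_eventually)
  then show ?thesis
    by (simp add: linear_axis_expansion[OF lin[OF S(2)], symmetric])
qed

context
  fixes S :: "(real^'n::finite) set" and r :: "real^'n"
    and V :: "real^'n \<Rightarrow> real^'m::finite" and W :: "real^'n \<Rightarrow> real^'k::finite"
    and L :: "real^'n \<Rightarrow> real^'m \<Rightarrow> real^'k"
  assumes V: "smooth_on S V" and W: "smooth_on S W" and r: "r \<in> S"
    and L: "cont_linear_family S r L" and rel: "\<forall>p\<in>S. W p = L p (V p)"
begin

lemma tendsto_related_line:
  assumes "((\<lambda>t. (1 / t ^ k) *\<^sub>R V (r + t *\<^sub>R u)) \<longlongrightarrow> c) (at 0)"
  shows "((\<lambda>t. (1 / t ^ k) *\<^sub>R W (r + t *\<^sub>R u)) \<longlongrightarrow> L r c) (at 0)"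
proof -
  have S: "open S" using V by (rule smooth_on_open)
  have "\<forall>\<^sub>F t in at (0::real). L (r + t *\<^sub>R u) ((1 / t ^ k) *\<^sub>R V (r + t *\<^sub>R u)) = (1 / t ^ k) *\<^sub>R W (r + t *\<^sub>R u)"
    using eventually_line_in_open[OF S r, of u]
    by (rule eventually_mono) (use L rel in \<open>simp add: cont_linear_family_def linear_scale\<close>)
  with tendsto_cont_linear_family[OF L S r assms] show ?thesis
    by (rule Lim_transform_eventually)
qed

lemma jet_eq_0_transfer:
  assumes "jet k V r = (\<lambda>_. 0)"
  shows "jet k W r = (\<lambda>_. 0)"
proof -
  have L0: "L r 0 = 0" using L r by (simp add: cont_linear_family_def linear_0)
  have "smallo_pow k (\<lambda>t. W (r + t *\<^sub>R u))" for u
  proof -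
    have "((\<lambda>t. (1 / t ^ k) *\<^sub>R V (r + t *\<^sub>R u)) \<longlongrightarrow> 0) (at 0)"
      using assms jet_eq_0_iff_smallo[OF V r] unfolding smallo_pow_def by blast
    from tendsto_related_line[OF this] show ?thesis
      unfolding smallo_pow_def L0 .
  qed
  then show ?thesis using jet_eq_0_iff_smallo[OF W r] by blast
qed

lemma leading_jet_transfer:
  assumes "0 < k \<longrightarrow> jet (k - 1) V r = (\<lambda>_. 0)"
  shows "jet k W r x = L r (jet k V r x)"
proof (cases k)
  case 0
  then show ?thesis using rel r by (simp add: jet_0)
next
  case (Suc k')
  then have V0: "jet k' V r = (\<lambda>_. 0)" using assms by simp
  have lim_W: "((\<lambda>t. (1 / t ^ Suc k') *\<^sub>R W (r + t *\<^sub>R (x - r))) \<longlongrightarrow> jet (Suc k') W r (r + (x - r))) (at 0)"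
    by (rule tendsto_jet_Suc[OF W r jet_eq_0_transfer[OF V0]])
  have lim_V: "((\<lambda>t. (1 / t ^ Suc k') *\<^sub>R W (r + t *\<^sub>R (x - r))) \<longlongrightarrow> L r (jet (Suc k') V r (r + (x - r)))) (at 0)"
    by (rule tendsto_related_line[OF tendsto_jet_Suc[OF V r V0]])
  have "jet (Suc k') W r (r + (x - r)) = L r (jet (Suc k') V r (r + (x - r)))"
    by (rule tendsto_unique[OF _ lim_W lim_V]) simp
  then show ?thesis using Suc by simp
qed

end

lemma jet_invariants_transfer:
  fixes V :: "real^'n::finite \<Rightarrow> real^'m::finite" and W :: "real^'n \<Rightarrow> real^'k::finite"
  assumes V: "smooth_on S V" and W: "smooth_on S W" and r: "r \<in> S"
    and L: "cont_linear_family S r L" "\<forall>p\<in>S. W p = L p (V p)" "inj (L r)"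
    and L': "cont_linear_family S r L'" "\<forall>p\<in>S. V p = L' p (W p)"
  shows "jet_order V r = jet_order W r"
    and "semi_homogeneous k V r \<longleftrightarrow> semi_homogeneous k W r"
proof -
  have jets_0: "jet m V r = (\<lambda>_. 0) \<longleftrightarrow> jet m W r = (\<lambda>_. 0)" for m
    using jet_eq_0_transfer[OF V W r L(1,2)] jet_eq_0_transfer[OF W V r L'] by blast
  then show "jet_order V r = jet_order W r"
    unfolding jet_order_def by simp
  have "L r v = 0 \<longleftrightarrow> v = 0" for v
    using L(1,3) r unfolding cont_linear_family_def by (metis linear_0 linear_injective_0)
  then have "isolated_zero (jet k V r) r \<longleftrightarrow> isolated_zero (jet k W r) r"
    if "0 < k \<longrightarrow> jet (k - 1) V r = (\<lambda>_. 0)"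
    using leading_jet_transfer[OF V W r L(1,2) that] unfolding isolated_zero_def by simp
  then show "semi_homogeneous k V r \<longleftrightarrow> semi_homogeneous k W r"
    unfolding semi_homogeneous_def using jets_0 by blast
qed

section \<open>Change of orthonormal frame in a Euclidean plane\<close>

definition calB_vec :: "(real^2 \<Rightarrow> real^2 \<Rightarrow> real) \<Rightarrow> (real^2 \<Rightarrow> real^2) \<Rightarrow> real^2 \<Rightarrow> real^2 \<Rightarrow> real^2" where
  "calB_vec H S X1 X2 = (H X1 (S X1) - H X2 (S X2)) *\<^sub>R X1 + (2 * H X1 (S X2)) *\<^sub>R X2"

lemma calB_eq_calB_vec: "calB h B X1 X2 p = calB_vec (h p) (B p) (X1 p) (X2 p)"
  by (simp add: calB_def calB_vec_def)

text \<open>If \<open>Y1 = a X1 + b X2\<close>, this map acts on \<open>X\<close>-coordinates as multiplication by \<open>a - i b\<close>.\<close>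

definition frame_rotation :: "(real^2 \<Rightarrow> real^2 \<Rightarrow> real) \<Rightarrow> real^2 \<Rightarrow> real^2 \<Rightarrow> real^2 \<Rightarrow> real^2 \<Rightarrow> real^2" where
  "frame_rotation H X1 X2 Y1 v = H Y1 X1 *\<^sub>R v - H Y1 X2 *\<^sub>R (H v X1 *\<^sub>R X2 - H v X2 *\<^sub>R X1)"

lemma orthonormal_pair_coeffs:
  fixes a b c d :: real
  assumes ab: "a\<^sup>2 + b\<^sup>2 = 1" and cd: "c\<^sup>2 + d\<^sup>2 = 1" and orth: "a * c + b * d = 0"
  obtains e where "e\<^sup>2 = 1" "c = - b * e" "d = a * e"
proof -
  define e where "e = a * d - b * c"
  have "e\<^sup>2 + (a * c + b * d)\<^sup>2 = (a\<^sup>2 + b\<^sup>2) * (c\<^sup>2 + d\<^sup>2)"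
    unfolding e_def by algebra
  then have "e\<^sup>2 = 1" using assms by simp
  moreover have "c = c * (a\<^sup>2 + b\<^sup>2) - a * (a * c + b * d)" "d = d * (a\<^sup>2 + b\<^sup>2) - b * (a * c + b * d)"
    using ab orth by simp_all
  then have "c = - b * e" "d = a * e"
    unfolding e_def by algebra+
  ultimately show ?thesis using that by blast
qed

locale inner_product_form =
  fixes H :: "real^2 \<Rightarrow> real^2 \<Rightarrow> real"
  assumes bilinear: "bilinear H"
    and sym: "H v w = H w v"
    and pos: "v \<noteq> 0 \<Longrightarrow> 0 < H v v"
begin

lemmas bilinear_simps =
  bilinear_ladd[OF bilinear] bilinear_lsub[OF bilinear] bilinear_lmul[OF bilinear]
  bilinear_radd[OF bilinear] bilinear_rsub[OF bilinear] bilinear_rmul[OF bilinear]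
  bilinear_lzero[OF bilinear] bilinear_rzero[OF bilinear]

text \<open>The key is the identity \<open>det(b,c) a - det(a,c) b + det(a,b) c = 0\<close> in \<open>\<real>\<^sup>2\<close>,
  which first shows \<open>det(X1,X2) \<noteq> 0\<close> and then that \<open>v - H v X1 X1 - H v X2 X2\<close> is
  \<open>H\<close>-orthogonal to itself.\<close>

lemma orthonormal_expansion:
  assumes X: "H X1 X1 = 1" "H X2 X2 = 1" "H X1 X2 = 0"
  shows "v = H v X1 *\<^sub>R X1 + H v X2 *\<^sub>R X2"
proof -
  define det where "det a b = a$1 * b$2 - a$2 * b$1" for a b :: "real^2"
  have det_identity: "det b c *\<^sub>R a - det a c *\<^sub>R b + det a b *\<^sub>R c = 0" for a b c
    unfolding det_def by (simp add: vec_eq_iff forall_2 algebra_simps)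
  have X21: "H X2 X1 = 0" using X(3) sym by metis
  have "det X1 X2 \<noteq> 0"
  proof
    assume d0: "det X1 X2 = 0"
    have "det X2 c = 0" for c
    proof -
      have "H (det X2 c *\<^sub>R X1 - det X1 c *\<^sub>R X2 + det X1 X2 *\<^sub>R c) X1 = 0"
        unfolding det_identity[where a = X1 and b = X2 and c = c] by (simp add: bilinear_simps)
      then show ?thesis using d0 X X21 by (simp add: bilinear_simps)
    qed
    from this[of "axis 1 1"] this[of "axis 2 1"] have "X2 = 0"
      unfolding det_def by (simp add: axis_def vec_eq_iff forall_2)
    then show False using X(2) bilinear_simps by simp
  qed
  define w where "w = v - H v X1 *\<^sub>R X1 - H v X2 *\<^sub>R X2"
  have "H w X1 = 0" "H w X2 = 0"
    using X X21 unfolding w_def by (simp_all add: bilinear_simps)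
  then have "H X1 w = 0" "H X2 w = 0"
    using sym by metis+
  moreover have "H (det X2 w *\<^sub>R X1 - det X1 w *\<^sub>R X2 + det X1 X2 *\<^sub>R w) w = 0"
    unfolding det_identity[where a = X1 and b = X2 and c = w] by (simp add: bilinear_simps)
  ultimately have "det X1 X2 * H w w = 0" by (simp add: bilinear_simps)
  then have "w = 0" using \<open>det X1 X2 \<noteq> 0\<close> pos by force
  then show ?thesis unfolding w_def by (simp add: algebra_simps)
qed

lemma linear_frame_rotation: "linear (frame_rotation H X1 X2 Y1)"
  unfolding frame_rotation_def
  by (rule linearI) (simp_all add: bilinear_simps algebra_simps)

lemma inj_frame_rotation:
  assumes X: "H X1 X1 = 1" "H X2 X2 = 1" "H X1 X2 = 0" and Y: "H Y1 Y1 = 1"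
  shows "inj (frame_rotation H X1 X2 Y1)"
  unfolding linear_injective_0[OF linear_frame_rotation]
proof (intro allI impI)
  fix v assume eq: "frame_rotation H X1 X2 Y1 v = 0"
  have X21: "H X2 X1 = 0" using X(3) sym by metis
  obtain a b where y1: "Y1 = a *\<^sub>R X1 + b *\<^sub>R X2"
    using orthonormal_expansion[OF X, of Y1] by blast
  obtain p q where v: "v = p *\<^sub>R X1 + q *\<^sub>R X2"
    using orthonormal_expansion[OF X, of v] by blast
  have ab: "a\<^sup>2 + b\<^sup>2 = 1" using Y unfolding y1 by (simp add: bilinear_simps X X21 power2_eq_square)
  have z: "(a * p + b * q) *\<^sub>R X1 + (a * q - b * p) *\<^sub>R X2 = 0"
    using eq unfolding frame_rotation_def y1 v by (simp add: bilinear_simps X X21 algebra_simps)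
  have "H ((a * p + b * q) *\<^sub>R X1 + (a * q - b * p) *\<^sub>R X2) X1 = 0"
    "H ((a * p + b * q) *\<^sub>R X1 + (a * q - b * p) *\<^sub>R X2) X2 = 0"
    unfolding z by (simp_all add: bilinear_simps)
  then have e1: "a * p + b * q = 0" and e2: "a * q - b * p = 0"
    by (simp_all add: bilinear_simps X X21)
  have "p = a * (a * p + b * q) - b * (a * q - b * p)"
    using ab by algebra
  then have "p = 0" using e1 e2 by simp
  moreover have "q = b * (a * p + b * q) + a * (a * q - b * p)"
    using ab by algebra
  then have "q = 0" using e1 e2 by simp
  ultimately show "v = 0" using v by simp
qed

lemma form_in_frame:
  assumes lin: "linear S" and self_adjoint: "\<And>v w. H v (S w) = H w (S v)"
  shows "H (a *\<^sub>R x + b *\<^sub>R y) (S (c *\<^sub>R x + d *\<^sub>R y))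
    = a * c * H x (S x) + (a * d + b * c) * H x (S y) + b * d * H y (S y)"
proof -
  have "H y (S x) = H x (S y)" using self_adjoint by metis
  then show ?thesis
    by (simp add: bilinear_simps linear_add[OF lin] linear_scale[OF lin] algebra_simps)
qed

lemma calB_vec_frame_change:
  assumes lin: "linear S" and self_adjoint: "\<And>v w. H v (S w) = H w (S v)"
    and X: "H X1 X1 = 1" "H X2 X2 = 1" "H X1 X2 = 0"
    and Y: "H Y1 Y1 = 1" "H Y2 Y2 = 1" "H Y1 Y2 = 0"
  shows "calB_vec H S Y1 Y2 = frame_rotation H X1 X2 Y1 (calB_vec H S X1 X2)"
proof -
  have X21: "H X2 X1 = 0" using X(3) sym by metis
  obtain a b where y1: "Y1 = a *\<^sub>R X1 + b *\<^sub>R X2"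
    using orthonormal_expansion[OF X, of Y1] by blast
  obtain c d where y2: "Y2 = c *\<^sub>R X1 + d *\<^sub>R X2"
    using orthonormal_expansion[OF X, of Y2] by blast
  have ab: "a\<^sup>2 + b\<^sup>2 = 1" and cd: "c\<^sup>2 + d\<^sup>2 = 1" and orth: "a * c + b * d = 0"
    using Y unfolding y1 y2 by (simp_all add: bilinear_simps X X21 power2_eq_square algebra_simps)
  obtain e where e: "e\<^sup>2 = 1" "c = - b * e" "d = a * e"
    using orthonormal_pair_coeffs[OF ab cd orth] .
  define k11 where "k11 = H X1 (S X1)"
  define k12 where "k12 = H X1 (S X2)"
  define k22 where "k22 = H X2 (S X2)"
  define m11 where "m11 = H Y1 (S Y1)"
  define m12 where "m12 = H Y1 (S Y2)"
  define m22 where "m22 = H Y2 (S Y2)"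
  note form = form_in_frame[OF lin self_adjoint, where x = X1 and y = X2, folded k11_def k12_def k22_def]
  have m11: "m11 = a * a * k11 + (a * b + b * a) * k12 + b * b * k22"
    unfolding m11_def y1 by (rule form)
  have m22: "m22 = c * c * k11 + (c * d + d * c) * k12 + d * d * k22"
    unfolding m22_def y2 by (rule form)
  have m12: "m12 = a * c * k11 + (a * d + b * c) * k12 + b * d * k22"
    unfolding m12_def y1 y2 by (rule form)
  have p_coeff: "(m11 - m22) * a + 2 * m12 * c = a * (k11 - k22) + b * (2 * k12)"
    unfolding m11 m22 m12 e(2,3) using e(1) ab by algebra
  have q_coeff: "(m11 - m22) * b + 2 * m12 * d = a * (2 * k12) - b * (k11 - k22)"
    unfolding m11 m22 m12 e(2,3) using e(1) ab by algebra
  have "calB_vec H S Y1 Y2 = (m11 - m22) *\<^sub>R Y1 + (2 * m12) *\<^sub>R Y2"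
    unfolding calB_vec_def m11_def m12_def m22_def ..
  also have "\<dots> = ((m11 - m22) * a + 2 * m12 * c) *\<^sub>R X1 + ((m11 - m22) * b + 2 * m12 * d) *\<^sub>R X2"
    unfolding y1 y2 by (simp add: algebra_simps)
  also have "\<dots> = (a * (k11 - k22) + b * (2 * k12)) *\<^sub>R X1 + (a * (2 * k12) - b * (k11 - k22)) *\<^sub>R X2"
    unfolding p_coeff q_coeff ..
  also have "\<dots> = frame_rotation H X1 X2 Y1 (calB_vec H S X1 X2)"
    unfolding frame_rotation_def calB_vec_def y1 k11_def k12_def k22_def
    by (simp add: bilinear_simps X X21 algebra_simps)
  finally show ?thesis .
qed

end

section \<open>Equiaffine immersions\<close>

lemma cross3_coordinates:
  fixes u v w :: "real^3"
  assumes "w = z1 *\<^sub>R u + z2 *\<^sub>R v"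
  shows "z1 * inner (cross3 u v) (cross3 u v) = inner (cross3 u v) (cross3 w v)"
    and "z2 * inner (cross3 u v) (cross3 u v) = inner (cross3 u v) (cross3 u w)"
  using assms by (simp_all add: cross_add_left cross_add_right cross_mult_left cross_mult_right)

lemma linear_dmap: "g differentiable (at p) \<Longrightarrow> linear (dmap g p)"
  using linear_frechet_derivative by (simp add: dmap_def[abs_def])

locale equiaffine_immersion =
  fixes U :: "(real^2) set" and f xi :: "real^2 \<Rightarrow> real^3"
    and h :: "real^2 \<Rightarrow> real^2 \<Rightarrow> real^2 \<Rightarrow> real" and B :: "real^2 \<Rightarrow> real^2 \<Rightarrow> real^2"
  assumes f_smooth: "smooth_on U f" and xi_smooth: "smooth_on U xi"
    and immersion: "\<forall>p\<in>U. inj (dmap f p)"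
    and transversal: "\<forall>p\<in>U. xi p \<notin> range (dmap f p)"
    and h_def: "\<forall>p\<in>U. \<forall>v w. d2map f p v w - h p v w *\<^sub>R xi p \<in> range (dmap f p)"
    and equiaffine: "\<forall>p\<in>U. \<forall>v. dmap xi p v = - dmap f p (B p v)"
    and h_posdef: "\<forall>p\<in>U. \<forall>v. v \<noteq> 0 \<longrightarrow> h p v v > 0"
begin

definition normal :: "real^2 \<Rightarrow> real^3" where
  "normal p = cross3 (pd [1] f p) (pd [2] f p)"

definition h_coeff :: "2 \<Rightarrow> 2 \<Rightarrow> real^2 \<Rightarrow> real" where
  "h_coeff a b p = inner (normal p) (pd [a, b] f p) / inner (normal p) (xi p)"

definition B_coeff :: "2 \<Rightarrow> 2 \<Rightarrow> real^2 \<Rightarrow> real" where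
  "B_coeff b c p = B p (axis c 1) $ b"

lemma U_open: "open U"
  using f_smooth by (rule smooth_on_open)

lemma dmap_f_eq:
  assumes "p \<in> U"
  shows "dmap f p v = v$1 *\<^sub>R pd [1] f p + v$2 *\<^sub>R pd [2] f p"
  unfolding dmap_def frechet_derivative_axis_expansion[OF smooth_on_differentiable[OF f_smooth assms]] sum_2 ..

lemma normal_orthogonal_dmap: "p \<in> U \<Longrightarrow> inner (normal p) (dmap f p v) = 0"
  by (simp add: dmap_f_eq normal_def inner_add_right dot_cross_self)

lemma normal_neq_0:
  assumes p: "p \<in> U"
  shows "normal p \<noteq> 0"
proof
  assume N0: "normal p = 0"
  define f1 where "f1 = pd [1] f p"
  define f2 where "f2 = pd [2] f p"
  define v :: "real^2" where "v = (\<chi> i. if i = 1 then inner f2 f2 else - inner f1 f2)"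
  have "dmap f p v = inner f2 f2 *\<^sub>R f1 - inner f1 f2 *\<^sub>R f2"
    unfolding dmap_f_eq[OF p] v_def f1_def f2_def by simp
  also have "\<dots> = cross3 f2 (cross3 f1 f2)"
    unfolding Lagrange by (simp add: inner_commute[of f2 f1])
  also have "\<dots> = dmap f p 0"
    using N0 unfolding normal_def f1_def f2_def by (simp add: dmap_f_eq[OF p])
  finally have "v = 0" by (rule injD[OF immersion[rule_format, OF p]])
  then have "f2 = 0" unfolding v_def by (simp add: vec_eq_iff forall_2)
  then have "dmap f p (axis 2 1) = dmap f p 0"
    unfolding dmap_f_eq[OF p] f2_def by (simp add: axis_def)
  then have "axis 2 (1::real) = (0::real^2)" by (rule injD[OF immersion[rule_format, OF p]])
  then show False by (simp add: axis_eq_0_iff)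
qed

lemma inner_normal_xi_neq_0:
  assumes p: "p \<in> U"
  shows "inner (normal p) (xi p) \<noteq> 0"
proof
  assume z: "inner (normal p) (xi p) = 0"
  define N where "N = normal p"
  define f1 where "f1 = pd [1] f p"
  define f2 where "f2 = pd [2] f p"
  define y where "y = cross3 N (xi p)"
  have NN: "inner N N \<noteq> 0" using normal_neq_0[OF p] unfolding N_def by simp
  have "inner N N *\<^sub>R xi p = - cross3 N y"
    unfolding y_def Lagrange using z unfolding N_def by simp
  also have "\<dots> = inner f2 y *\<^sub>R f1 - inner f1 y *\<^sub>R f2"
    unfolding N_def normal_def f1_def f2_def by (simp add: cross_skew[of _ y] Lagrange inner_commute)
  finally have e: "inner N N *\<^sub>R xi p = inner f2 y *\<^sub>R f1 - inner f1 y *\<^sub>R f2" .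
  define v :: "real^2" where "v = (\<chi> i. if i = 1 then inner f2 y / inner N N else - inner f1 y / inner N N)"
  have "dmap f p v = (1 / inner N N) *\<^sub>R (inner f2 y *\<^sub>R f1 - inner f1 y *\<^sub>R f2)"
    unfolding dmap_f_eq[OF p] v_def f1_def f2_def by (simp add: algebra_simps divide_inverse)
  also have "\<dots> = xi p" unfolding e[symmetric] using NN by simp
  finally have "xi p \<in> range (dmap f p)" by (metis rangeI)
  then show False using transversal p by blast
qed

lemma d2map_f_eq:
  assumes p: "p \<in> U"
  shows "d2map f p v w = (\<Sum>a\<in>UNIV. \<Sum>b\<in>UNIV. (v$a * w$b) *\<^sub>R pd [a, b] f p)"
proof -
  have dmap_eq: "\<And>q. q \<in> U \<Longrightarrow> dmap f q w = (\<Sum>b\<in>UNIV. w$b *\<^sub>R pd [b] f q)"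
    unfolding dmap_def using frechet_derivative_axis_expansion[OF smooth_on_differentiable[OF f_smooth]]
    by blast
  have "d2map f p v w = frechet_derivative (\<lambda>q. \<Sum>b\<in>UNIV. w$b *\<^sub>R pd [b] f q) (at p) v"
    unfolding d2map_def using frechet_derivative_cong_open[OF U_open p dmap_eq] by simp
  also have "frechet_derivative (\<lambda>q. \<Sum>b\<in>UNIV. w$b *\<^sub>R pd [b] f q) (at p)
      = (\<lambda>v. \<Sum>b\<in>UNIV. w$b *\<^sub>R frechet_derivative (pd [b] f) (at p) v)"
    by (rule frechet_derivative_at[symmetric])
      (intro has_derivative_sum has_derivative_scaleR_right frechet_derivative_works[THEN iffD1]
        smooth_on_pd_differentiable[OF f_smooth p])
  also have "(\<Sum>b\<in>UNIV. w$b *\<^sub>R frechet_derivative (pd [b] f) (at p) v)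
      = (\<Sum>b\<in>UNIV. w$b *\<^sub>R (\<Sum>a\<in>UNIV. v$a *\<^sub>R pd [a, b] f p))"
    using frechet_derivative_axis_expansion[OF smooth_on_pd_differentiable[OF f_smooth p], where v = v]
    by (simp del: pd.simps add: pd_single_pd)
  also have "\<dots> = (\<Sum>a\<in>UNIV. \<Sum>b\<in>UNIV. (v$a * w$b) *\<^sub>R pd [a, b] f p)"
    by (simp add: sum_2 algebra_simps del: pd.simps)
  finally show ?thesis .
qed

lemma h_eq_coeffs:
  assumes p: "p \<in> U"
  shows "h p v w = v$1 * w$1 * h_coeff 1 1 p + v$1 * w$2 * h_coeff 1 2 p
    + (v$2 * w$1 * h_coeff 2 1 p + v$2 * w$2 * h_coeff 2 2 p)"
proof -
  obtain z where z: "d2map f p v w - h p v w *\<^sub>R xi p = dmap f p z"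
    using h_def p by blast
  have "inner (normal p) (d2map f p v w - h p v w *\<^sub>R xi p) = 0"
    unfolding z using normal_orthogonal_dmap[OF p] .
  then have "h p v w = inner (normal p) (d2map f p v w) / inner (normal p) (xi p)"
    using inner_normal_xi_neq_0[OF p] by (simp add: inner_diff_right field_simps)
  then show ?thesis
    unfolding d2map_f_eq[OF p] h_coeff_def
    by (simp add: sum_2 inner_add_right add_divide_distrib del: pd.simps)
qed

lemma h_coeff_sym: "p \<in> U \<Longrightarrow> h_coeff a b p = h_coeff b a p"
  unfolding h_coeff_def using pd_swap[OF f_smooth] by metis

lemma smooth_on_normal: "smooth_on U normal"
  unfolding normal_def[abs_def] by (intro smooth_on_cross3 smooth_on_pd f_smooth)

lemma smooth_on_h_coeff: "smooth_on U (h_coeff a b)"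
proof -
  have "smooth_on U (\<lambda>p. inner (normal p) (pd [a, b] f p) * inverse (inner (normal p) (xi p)))"
    by (intro smooth_on_mult smooth_on_inner smooth_on_normal smooth_on_pd f_smooth smooth_on_inverse xi_smooth)
      (use inner_normal_xi_neq_0 in blast)
  then show ?thesis
    unfolding h_coeff_def[abs_def] by (simp add: divide_inverse)
qed

lemma inner_product_form_h: "p \<in> U \<Longrightarrow> inner_product_form (h p)"
  unfolding inner_product_form_def bilinear_def
  using h_posdef h_coeff_sym[of p 1 2]
  by (auto intro!: linearI simp: h_eq_coeffs algebra_simps)

lemma B_linear:
  assumes p: "p \<in> U"
  shows "linear (B p)"
proof -
  have inj: "inj (dmap f p)" using immersion p by blast
  note Df = linear_dmap[OF smooth_on_differentiable[OF f_smooth p]]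
  note Dxi = linear_dmap[OF smooth_on_differentiable[OF xi_smooth p]]
  have eq: "dmap f p (B p v) = - dmap xi p v" for v
    using equiaffine p by simp
  show ?thesis
  proof (rule linearI)
    show "B p (v + w) = B p v + B p w" for v w
      by (rule injD[OF inj]) (simp add: eq linear_add[OF Df] linear_add[OF Dxi])
    show "B p (c *\<^sub>R v) = c *\<^sub>R B p v" for c v
      by (rule injD[OF inj]) (simp add: eq linear_scale[OF Df] linear_scale[OF Dxi])
  qed
qed

lemma B_eq_coeffs: "p \<in> U \<Longrightarrow> B p v $ b = v$1 * B_coeff b 1 p + v$2 * B_coeff b 2 p"
  using linear_axis_expansion[OF B_linear, of p v] by (simp add: B_coeff_def sum_2)

lemma pd_xi_eq_B_coeffs:
  assumes p: "p \<in> U"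
  shows "pd [c] xi p = (- B_coeff 1 c p) *\<^sub>R pd [1] f p + (- B_coeff 2 c p) *\<^sub>R pd [2] f p"
proof -
  have "pd [c] xi p = - dmap f p (B p (axis c 1))"
    using equiaffine p by (simp add: dmap_def)
  then show ?thesis
    unfolding dmap_f_eq[OF p] B_coeff_def by simp
qed

lemma smooth_on_B_coeff: "smooth_on U (B_coeff b c)"
proof -
  have smooth_1: "smooth_on U (\<lambda>p. - (inner (normal p) (cross3 (pd [c] xi p) (pd [2] f p)) * inverse (inner (normal p) (normal p))))"
    and smooth_2: "smooth_on U (\<lambda>p. - (inner (normal p) (cross3 (pd [1] f p) (pd [c] xi p)) * inverse (inner (normal p) (normal p))))"
    by (intro smooth_on_uminus smooth_on_mult smooth_on_inner smooth_on_normal smooth_on_cross3 smooth_on_pd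
        xi_smooth f_smooth smooth_on_inverse; use normal_neq_0 in simp)+
  have eq_1: "B_coeff 1 c p = - (inner (normal p) (cross3 (pd [c] xi p) (pd [2] f p)) * inverse (inner (normal p) (normal p)))"
    and eq_2: "B_coeff 2 c p = - (inner (normal p) (cross3 (pd [1] f p) (pd [c] xi p)) * inverse (inner (normal p) (normal p)))"
    if p: "p \<in> U" for p
    using cross3_coordinates[OF pd_xi_eq_B_coeffs[OF p, of c]] normal_neq_0[OF p]
    unfolding normal_def[symmetric] by (simp_all add: field_simps)
  consider "b = 1" | "b = 2" using exhaust_2 by blast
  then show ?thesis
  proof cases
    case 1
    show ?thesis unfolding 1 by (rule smooth_on_cong[OF smooth_1]) (simp add: eq_1)
  next
    case 2
    show ?thesis unfolding 2 by (rule smooth_on_cong[OF smooth_2]) (simp add: eq_2)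
  qed
qed

lemma inner_normal_pd2_xi:
  assumes p: "p \<in> U"
  shows "inner (normal p) (pd [a, c] xi p) = - (B_coeff 1 c p * h_coeff a 1 p + B_coeff 2 c p * h_coeff a 2 p) * inner (normal p) (xi p)"
proof -
  define Z where "Z b q = (- B_coeff b c q) *\<^sub>R pd [b] f q" for b q
  have sB: "smooth_on U (\<lambda>q. - B_coeff b c q)" for b
    by (intro smooth_on_uminus smooth_on_B_coeff)
  have sZ: "smooth_on U (Z b)" for b
    unfolding Z_def by (intro smooth_on_scaleR sB smooth_on_pd f_smooth)
  have pd_Z: "pd [a] (Z b) p = (- B_coeff b c p) *\<^sub>R pd [a] (pd [b] f) p + pd [a] (\<lambda>q. - B_coeff b c q) p *\<^sub>R pd [b] f p" for b
    unfolding Z_def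
    by (rule pd_single_bilinear[OF bounded_bilinear_scaleR smooth_on_differentiable[OF sB p]
          smooth_on_differentiable[OF smooth_on_pd[OF f_smooth] p]])
  have "pd [a, c] xi p = pd [a] (pd [c] xi) p" by simp
  also have "\<dots> = pd [a] (\<lambda>q. Z 1 q + Z 2 q) p"
    by (rule pd_cong_open[OF U_open _ p]) (unfold Z_def, rule pd_xi_eq_B_coeffs)
  also have "\<dots> = pd [a] (Z 1) p + pd [a] (Z 2) p"
    by (rule pd_add[OF U_open _ p]) (use smooth_on_differentiable[OF sZ] in simp)
  finally have "pd [a, c] xi p = (- B_coeff 1 c p) *\<^sub>R pd [a, 1] f p + pd [a] (\<lambda>q. - B_coeff 1 c q) p *\<^sub>R pd [1] f p
      + ((- B_coeff 2 c p) *\<^sub>R pd [a, 2] f p + pd [a] (\<lambda>q. - B_coeff 2 c q) p *\<^sub>R pd [2] f p)"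
    by (simp only: pd_Z pd_single_pd)
  moreover have "inner (normal p) (pd [1] f p) = 0" "inner (normal p) (pd [2] f p) = 0"
    unfolding normal_def by (simp_all only: dot_cross_self)
  moreover have "inner (normal p) (pd [a, b] f p) = h_coeff a b p * inner (normal p) (xi p)" for b
    unfolding h_coeff_def using inner_normal_xi_neq_0[OF p] by simp
  ultimately show ?thesis
    by (simp only: inner_add_right inner_scaleR_right) (simp add: algebra_simps)
qed

text \<open>Symmetry of \<open>\<partial>\<^sub>1\<partial>\<^sub>2\<xi>\<close> makes the matrix of \<open>h(\<cdot>, B \<cdot>)\<close> symmetric.\<close>

lemma B_self_adjoint:
  assumes p: "p \<in> U"
  shows "h p v (B p w) = h p w (B p v)"
proof -
  have "- (B_coeff 1 2 p * h_coeff 1 1 p + B_coeff 2 2 p * h_coeff 1 2 p) * inner (normal p) (xi p)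
      = - (B_coeff 1 1 p * h_coeff 2 1 p + B_coeff 2 1 p * h_coeff 2 2 p) * inner (normal p) (xi p)"
    using inner_normal_pd2_xi[OF p, of 1 2] inner_normal_pd2_xi[OF p, of 2 1] pd_swap[OF xi_smooth p, of 1 2]
    by metis
  then have "B_coeff 1 2 p * h_coeff 1 1 p + B_coeff 2 2 p * h_coeff 1 2 p
      = B_coeff 1 1 p * h_coeff 2 1 p + B_coeff 2 1 p * h_coeff 2 2 p"
    using inner_normal_xi_neq_0[OF p] by simp
  moreover have "h p v (B p w) - h p w (B p v) = (v$1 * w$2 - v$2 * w$1) *
     ((B_coeff 1 2 p * h_coeff 1 1 p + B_coeff 2 2 p * h_coeff 1 2 p)
      - (B_coeff 1 1 p * h_coeff 2 1 p + B_coeff 2 1 p * h_coeff 2 2 p))"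
    unfolding h_eq_coeffs[OF p] B_eq_coeffs[OF p] by (simp add: algebra_simps)
  ultimately show ?thesis by simp
qed

lemma smooth_on_h_comp:
  assumes S: "S \<subseteq> U" and F: "smooth_on S F" and G: "smooth_on S G"
  shows "smooth_on S (\<lambda>p. h p (F p) (G p))"
proof -
  have "smooth_on S (h_coeff a b)" for a b
    using smooth_on_subset[OF smooth_on_h_coeff smooth_on_open[OF F] S] .
  then have "smooth_on S (\<lambda>p. F p$1 * G p$1 * h_coeff 1 1 p + F p$1 * G p$2 * h_coeff 1 2 p
      + (F p$2 * G p$1 * h_coeff 2 1 p + F p$2 * G p$2 * h_coeff 2 2 p))"
    by (intro smooth_on_add smooth_on_mult smooth_on_component F G)
  then show ?thesis
    by (rule smooth_on_cong) (use S h_eq_coeffs in auto)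
qed

lemma smooth_on_B_comp:
  assumes S: "S \<subseteq> U" and F: "smooth_on S F"
  shows "smooth_on S (\<lambda>p. B p (F p))"
proof (rule smooth_on_vecI[OF smooth_on_open[OF F]])
  fix b
  have "smooth_on S (B_coeff b c)" for c
    using smooth_on_subset[OF smooth_on_B_coeff smooth_on_open[OF F] S] .
  then have "smooth_on S (\<lambda>p. F p$1 * B_coeff b 1 p + F p$2 * B_coeff b 2 p)"
    by (intro smooth_on_add smooth_on_mult smooth_on_component F)
  then show "smooth_on S (\<lambda>p. B p (F p) $ b)"
    by (rule smooth_on_cong) (use S B_eq_coeffs in auto)
qed

lemma smooth_on_calB:
  assumes S: "S \<subseteq> U" and X: "smooth_on S X1" "smooth_on S X2"
  shows "smooth_on S (calB h B X1 X2)"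
  unfolding calB_def[abs_def]
  by (intro smooth_on_add smooth_on_scaleR smooth_on_diff smooth_on_mult smooth_on_const
      smooth_on_open[OF X(1)] smooth_on_h_comp S smooth_on_B_comp X)

lemma calB_frame_change:
  assumes S: "S \<subseteq> U" "r \<in> S"
    and X: "smooth_on S X1" "smooth_on S X2" "h_orthonormal_frame h S X1 X2"
    and Y: "smooth_on S Y1" "smooth_on S Y2" "h_orthonormal_frame h S Y1 Y2"
  obtains L where "cont_linear_family S r L" "\<forall>p\<in>S. calB h B Y1 Y2 p = L p (calB h B X1 X2 p)" "inj (L r)"
proof
  let ?L = "\<lambda>p. frame_rotation (h p) (X1 p) (X2 p) (Y1 p)"
  have H: "inner_product_form (h p)" if "p \<in> S" for p
    using inner_product_form_h S(1) that by blast
  have X_on: "h p (X1 p) (X1 p) = 1" "h p (X2 p) (X2 p) = 1" "h p (X1 p) (X2 p) = 0"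
    and Y_on: "h p (Y1 p) (Y1 p) = 1" "h p (Y2 p) (Y2 p) = 1" "h p (Y1 p) (Y2 p) = 0"
    if "p \<in> S" for p
    using X(3) Y(3) that unfolding h_orthonormal_frame_def by auto
  have "smooth_on S (\<lambda>p. ?L p (axis j 1))" for j
    unfolding frame_rotation_def
    by (intro smooth_on_diff smooth_on_scaleR smooth_on_h_comp S X Y smooth_on_const smooth_on_open[OF X(1)])
  then show "cont_linear_family S r ?L"
    unfolding cont_linear_family_def
    using inner_product_form.linear_frame_rotation[OF H] smooth_on_isCont S(2) by blast
  show "\<forall>p\<in>S. calB h B Y1 Y2 p = ?L p (calB h B X1 X2 p)"
  proof
    fix p assume p: "p \<in> S"
    then have "p \<in> U" using S(1) by blast
    show "calB h B Y1 Y2 p = ?L p (calB h B X1 X2 p)"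
      unfolding calB_eq_calB_vec
      by (rule inner_product_form.calB_vec_frame_change[OF H[OF p] B_linear[OF \<open>p \<in> U\<close>]
            B_self_adjoint[OF \<open>p \<in> U\<close>] X_on[OF p] Y_on[OF p]])
  qed
  show "inj (?L r)"
    by (rule inner_product_form.inj_frame_rotation[OF H[OF S(2)] X_on[OF S(2)] Y_on(1)[OF S(2)]])
qed

end

theorem lemma3p3:
  fixes U V W :: "(real^2) set"
    and f xi :: "real^2 \<Rightarrow> real^3"
    and h :: "real^2 \<Rightarrow> real^2 \<Rightarrow> real^2 \<Rightarrow> real"
    and B :: "real^2 \<Rightarrow> real^2 \<Rightarrow> real^2"
    and X1 X2 Y1 Y2 :: "real^2 \<Rightarrow> real^2"
    and r0 :: "real^2"
  assumes f_smooth: "smooth_on U f"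
    and xi_smooth: "smooth_on U xi"
    and immersion: "\<forall>p\<in>U. inj (dmap f p)"
    and transversal: "\<forall>p\<in>U. xi p \<notin> range (dmap f p)"
    and h_def: "\<forall>p\<in>U. \<forall>v w. d2map f p v w - h p v w *\<^sub>R xi p \<in> range (dmap f p)"
    and equiaffine: "\<forall>p\<in>U. \<forall>v. dmap xi p v = - dmap f p (B p v)"
    and h_posdef: "\<forall>p\<in>U. \<forall>v. v \<noteq> 0 \<longrightarrow> h p v v > 0"
    and r0_in: "r0 \<in> U"
    and r0_umbilic: "umbilical B r0"
    and r0_isolated: "\<exists>e>0. \<forall>p\<in>U. 0 < dist p r0 \<and> dist p r0 < e \<longrightarrow> \<not> umbilical B p"
    and V_nbhd: "r0 \<in> V" "V \<subseteq> U"
    and X_smooth: "smooth_on V X1" "smooth_on V X2"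
    and X_on: "h_orthonormal_frame h V X1 X2"
    and W_nbhd: "r0 \<in> W" "W \<subseteq> U"
    and Y_smooth: "smooth_on W Y1" "smooth_on W Y2"
    and Y_on: "h_orthonormal_frame h W Y1 Y2"
  shows "jet_order (calB h B X1 X2) r0 = jet_order (calB h B Y1 Y2) r0
       \<and> (\<forall>k. semi_homogeneous k (calB h B X1 X2) r0 \<longleftrightarrow> semi_homogeneous k (calB h B Y1 Y2) r0)"
proof -
  interpret equiaffine_immersion U f xi h B
    using f_smooth xi_smooth immersion transversal h_def equiaffine h_posdef by unfold_locales
  define S where "S = V \<inter> W"
  have S: "open S" "r0 \<in> S" "S \<subseteq> U"
    using smooth_on_open[OF X_smooth(1)] smooth_on_open[OF Y_smooth(1)] V_nbhd W_nbhd by (auto simp: S_def)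
  have X: "smooth_on S X1" "smooth_on S X2" "h_orthonormal_frame h S X1 X2"
    and Y: "smooth_on S Y1" "smooth_on S Y2" "h_orthonormal_frame h S Y1 Y2"
    using smooth_on_subset[OF X_smooth(1) S(1)] smooth_on_subset[OF X_smooth(2) S(1)]
      smooth_on_subset[OF Y_smooth(1) S(1)] smooth_on_subset[OF Y_smooth(2) S(1)] X_on Y_on
    unfolding S_def h_orthonormal_frame_def by auto
  obtain L where L: "cont_linear_family S r0 L" "\<forall>p\<in>S. calB h B Y1 Y2 p = L p (calB h B X1 X2 p)" "inj (L r0)"
    using calB_frame_change[OF S(3,2) X Y] .
  obtain L' where L': "cont_linear_family S r0 L'" "\<forall>p\<in>S. calB h B X1 X2 p = L' p (calB h B Y1 Y2 p)"
    using calB_frame_change[OF S(3,2) Y X] by blast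
  show ?thesis
    using jet_invariants_transfer[OF smooth_on_calB[OF S(3) X(1,2)] smooth_on_calB[OF S(3) Y(1,2)] S(2) L L']
    by blast
qed

end
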